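(* For every non-trivial geometric lattice $\mathcal L$, the product $\bullet$ on $\mathcal{MD}(\mathcal L)$ is associative, graded commutative (i.e. $\Gamma_1\bullet\Gamma_2=(-1)^{\deg\Gamma_1\deg\Gamma_2}\Gamma_2\bullet\Gamma_1$), preserves degrees (degrees add), and has unit the class of the empty modular diagram $(\mathcal L,\mathrm{id}_{\mathcal L},\emptyset)$.
   Context: Geometric lattices. A geometric lattice is a finite lattice $\mathcal L$ (bottom $\hat0$, top $\hat1$, join $\vee$, meet $\wedge$) which is ranked (all maximal chains from $\hat0$ to a given element $F$ have the same length $\mathrm{rk}(F)$), atomic (every element is a join of atoms, i.e. rank-one elements) and semimodular ($\mathrm{rk}(F_1\wedge F_2)+\mathrm{rk}(F_1\vee F_2)\le\mathrm{rk}(F_1)+\mathrm{rk}(F_2)$). Elements are called flats, $\mathrm{At}(\mathcal L)$ denotes the set of atoms, and $\mathcal L$ is non-trivial if it has at least two elements. For a finite family $J$ of atoms, $\bigvee J$ is its join ($\bigvee\emptyset=\hat0$). Every interval $[F_1,F_2]$ is a geometric lattice, and products of geometric lattices are geometric lattices. A flat $F$ is modular if $\mathrm{rk}(F\wedge F')+\mathrm{rk}(F\vee F')=\mathrm{rk}(F)+\mathrm{rk}(F')$ for every flat $F'$. An embedding $\varphi:\mathcal L_1\to\mathcal L_2$ of geometric lattices is an injective order-preserving map preserving joins and sending atoms to atoms. Modular diagrams. Let $\mathcal L$ be a non-trivial geometric lattice. A modular extension of $\mathcal L$ is a pair $(\mathcal E,\iota)$ where $\mathcal E$ is a geometric lattice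 and $\iota:\mathcal L\to\mathcal E$ is an embedding whose image is an interval $[\hat0,F_\iota]$ with $F_\iota$ a modular flat of $\mathcal E$. A modular diagram of $\mathcal L$ is a triple $\Gamma=(\mathcal E,\iota,J)$ with $(\mathcal E,\iota)$ a modular extension and $J=(H_1,\dots,H_n)$ a finite word in the alphabet $\mathrm{At}(\mathcal E)$; its degree is $\deg\Gamma=n-2\big(\mathrm{rk}\bigvee J-\mathrm{rk}((\bigvee J)\wedge F_\iota)\big)$. $\mathcal{MD}(\mathcal L)$ is the $\mathbb Z$-graded $\mathbb Q$-vector space spanned by all modular diagrams, quotiented by the relations: (R1) $(\mathcal E,\iota,J)\sim-(\mathcal E,\iota,J')$ if $J'$ is obtained from $J$ by transposing two letters; (R2) $(\mathcal E,\iota,J)\sim(\mathcal E',\iota',J')$ if there is an embedding $\varphi:\mathcal E\to\mathcal E'$ with $\mathrm{rk}(\mathcal E)=\mathrm{rk}(\mathcal E')$, $\iota'=\varphi\circ\iota$ and $J'=\varphi(J)$ letterwise; (R3) $(\mathcal E,\iota,J)\sim0$ if $F_\iota\vee\bigvee J<\hat1_{\mathcal E}$; (R4) $(\mathcal E,\iota,J)\sim0$ if $\mathcal E\cong\mathcal E_1\times\mathcal E_2$ with $\mathcal E_1,\mathcal E_2$ non-trivial and $F_\iota\in\mathcal E_1\times\{\hat0\}$; (R5) $(\mathcal E,\iota,J)\sim0$ if there is a modular flat $F\ge F_\iota$ of $\mathcal E$ such that exactly two letters of $J$ are not below $F$. Product. For modular extensions $(\mathcal E_1,\iota_1),(\mathcal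 E_2,\iota_2)$ of $\mathcal L$, the pushout $\mathcal E_1\cup_{\mathcal L}\mathcal E_2$ is the subposet of $\mathcal E_1\times\mathcal E_2$ of pairs $(F_1,F_2)$ with $\iota_1^{-1}(F_1\wedge F_{\iota_1})=\iota_2^{-1}(F_2\wedge F_{\iota_2})$; it is a geometric lattice, and $\iota_{12}(A)=(\iota_1(A),\iota_2(A))$ makes it a modular extension of $\mathcal L$. Its atoms are the $(H,\hat0)$ with $H\in\mathrm{At}(\mathcal E_1)\setminus\iota_1(\mathcal L)$, the $(\hat0,H)$ with $H\in\mathrm{At}(\mathcal E_2)\setminus\iota_2(\mathcal L)$, and the $(\iota_1(H),\iota_2(H))$ with $H\in\mathrm{At}(\mathcal L)$, which identifies $\mathrm{At}(\mathcal E_1\cup_{\mathcal L}\mathcal E_2)$ with $\mathrm{At}(\mathcal E_1)\cup_{\mathrm{At}(\mathcal L)}\mathrm{At}(\mathcal E_2)$. The product is $(\mathcal E_1,\iota_1,J_1)\bullet(\mathcal E_2,\iota_2,J_2)=(\mathcal E_1\cup_{\mathcal L}\mathcal E_2,\iota_{12},J_1J_2)$ (concatenated word); it is well defined on $\mathcal{MD}(\mathcal L)$. *)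

theory Defs
  imports Complex_Main "HOL-Library.Nat_Bijection"
begin

text \<open>A (candidate) lattice is a carrier set of natural numbers together with an
order relation; only the values of the relation on the carrier matter.
Every finite lattice is isomorphic to one of this form.\<close>

record lat =
  lcar :: "nat set"
  lle  :: "nat \<Rightarrow> nat \<Rightarrow> bool"

definition is_lub :: "lat \<Rightarrow> nat set \<Rightarrow> nat \<Rightarrow> bool" where
  "is_lub L A x \<longleftrightarrow> x \<in> lcar L \<and> (\<forall>a\<in>A. lle L a x) \<and>
     (\<forall>y\<in>lcar L. (\<forall>a\<in>A. lle L a y) \<longrightarrow> lle L x y)"

definition is_glb :: "lat \<Rightarrow> nat set \<Rightarrow> nat \<Rightarrow> bool" where
  "is_glb L A x \<longleftrightarrow> x \<in> lcar L \<and> (\<forall>a\<in>A. lle L x a) \<and>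
     (\<forall>y\<in>lcar L. (\<forall>a\<in>A. lle L y a) \<longrightarrow> lle L y x)"

definition Join :: "lat \<Rightarrow> nat set \<Rightarrow> nat" where
  "Join L A = (THE x. is_lub L A x)"

definition Meet :: "lat \<Rightarrow> nat set \<Rightarrow> nat" where
  "Meet L A = (THE x. is_glb L A x)"

definition join :: "lat \<Rightarrow> nat \<Rightarrow> nat \<Rightarrow> nat" where
  "join L x y = Join L {x, y}"

definition meet :: "lat \<Rightarrow> nat \<Rightarrow> nat \<Rightarrow> nat" where
  "meet L x y = Meet L {x, y}"

definition bot :: "lat \<Rightarrow> nat" where
  "bot L = Join L {}"

definition top :: "lat \<Rightarrow> nat" where
  "top L = Meet L {}"

definition is_lattice :: "lat \<Rightarrow> bool" where
  "is_lattice L \<longleftrightarrow> finite (lcar L) \<and> lcar L \<noteq> {} \<and>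
     (\<forall>x\<in>lcar L. lle L x x) \<and>
     (\<forall>x\<in>lcar L. \<forall>y\<in>lcar L. lle L x y \<and> lle L y x \<longrightarrow> x = y) \<and>
     (\<forall>x\<in>lcar L. \<forall>y\<in>lcar L. \<forall>z\<in>lcar L. lle L x y \<and> lle L y z \<longrightarrow> lle L x z) \<and>
     (\<forall>x\<in>lcar L. \<forall>y\<in>lcar L. (\<exists>z. is_lub L {x, y} z) \<and> (\<exists>z. is_glb L {x, y} z))"

definition covers :: "lat \<Rightarrow> nat \<Rightarrow> nat \<Rightarrow> bool" where
  "covers L x y \<longleftrightarrow> x \<in> lcar L \<and> y \<in> lcar L \<and> lle L x y \<and> x \<noteq> y \<and>
     \<not> (\<exists>z\<in>lcar L. lle L x z \<and> x \<noteq> z \<and> lle L z y \<and> z \<noteq> y)"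

definition max_chain :: "lat \<Rightarrow> nat list \<Rightarrow> nat \<Rightarrow> bool" where
  "max_chain L xs F \<longleftrightarrow> xs \<noteq> [] \<and> hd xs = bot L \<and> last xs = F \<and>
     (\<forall>i. Suc i < length xs \<longrightarrow> covers L (xs ! i) (xs ! Suc i))"

definition ranked :: "lat \<Rightarrow> bool" where
  "ranked L \<longleftrightarrow> (\<forall>F\<in>lcar L. \<forall>xs ys. max_chain L xs F \<longrightarrow> max_chain L ys F
     \<longrightarrow> length xs = length ys)"

definition rk :: "lat \<Rightarrow> nat \<Rightarrow> nat" where
  "rk L F = length (SOME xs. max_chain L xs F) - 1"

definition atoms :: "lat \<Rightarrow> nat set" where
  "atoms L = {a \<in> lcar L. covers L (bot L) a}"

definition atomic :: "lat \<Rightarrow> bool" where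
  "atomic L \<longleftrightarrow> (\<forall>F\<in>lcar L. \<exists>A\<subseteq>atoms L. F = Join L A)"

definition semimodular :: "lat \<Rightarrow> bool" where
  "semimodular L \<longleftrightarrow> (\<forall>x\<in>lcar L. \<forall>y\<in>lcar L.
     rk L (meet L x y) + rk L (join L x y) \<le> rk L x + rk L y)"

definition geometric :: "lat \<Rightarrow> bool" where
  "geometric L \<longleftrightarrow> is_lattice L \<and> ranked L \<and> atomic L \<and> semimodular L"

definition nontrivial :: "lat \<Rightarrow> bool" where
  "nontrivial L \<longleftrightarrow> 2 \<le> card (lcar L)"

definition modular_flat :: "lat \<Rightarrow> nat \<Rightarrow> bool" where
  "modular_flat L F \<longleftrightarrow> F \<in> lcar L \<and> (\<forall>G\<in>lcar L.
     rk L (meet L F G) + rk L (join L F G) = rk L F + rk L G)"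

definition embedding :: "lat \<Rightarrow> lat \<Rightarrow> (nat \<Rightarrow> nat) \<Rightarrow> bool" where
  "embedding L1 L2 \<phi> \<longleftrightarrow> inj_on \<phi> (lcar L1) \<and> \<phi> ` lcar L1 \<subseteq> lcar L2 \<and>
     (\<forall>x\<in>lcar L1. \<forall>y\<in>lcar L1. lle L1 x y \<longrightarrow> lle L2 (\<phi> x) (\<phi> y)) \<and>
     (\<forall>x\<in>lcar L1. \<forall>y\<in>lcar L1. \<phi> (join L1 x y) = join L2 (\<phi> x) (\<phi> y)) \<and>
     \<phi> ` atoms L1 \<subseteq> atoms L2"

definition interval :: "lat \<Rightarrow> nat \<Rightarrow> nat \<Rightarrow> nat set" where
  "interval L a b = {x \<in> lcar L. lle L a x \<and> lle L x b}"

definition Fi :: "lat \<Rightarrow> (nat \<Rightarrow> nat) \<Rightarrow> nat" where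
  "Fi L \<iota> = \<iota> (top L)"

definition mod_ext :: "lat \<Rightarrow> lat \<Rightarrow> (nat \<Rightarrow> nat) \<Rightarrow> bool" where
  "mod_ext L E \<iota> \<longleftrightarrow> geometric E \<and> embedding L E \<iota> \<and>
     ((\<exists>F. modular_flat E F \<and> \<iota> ` lcar L = interval E (bot E) F))"

type_synonym diag = "lat \<times> (nat \<Rightarrow> nat) \<times> nat list"

fun is_diag :: "lat \<Rightarrow> diag \<Rightarrow> bool" where
  "is_diag L (E, \<iota>, J) \<longleftrightarrow> mod_ext L E \<iota> \<and> set J \<subseteq> atoms E"

fun deg :: "lat \<Rightarrow> diag \<Rightarrow> int" where
  "deg L (E, \<iota>, J) = int (length J) - 2 * (int (rk E (Join E (set J)))
       - int (rk E (meet E (Join E (set J)) (Fi L \<iota>))))"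

definition delta :: "diag \<Rightarrow> diag \<Rightarrow> rat" where
  "delta \<Gamma> = (\<lambda>d. if d = \<Gamma> then 1 else 0)"

text \<open>Generators of the relation subspace (R1)--(R5) in the free Q-vector space
(diag \<Rightarrow> rat, finitely supported) on the modular diagrams.\<close>
definition Rgen :: "lat \<Rightarrow> (diag \<Rightarrow> rat) set" where
  "Rgen L =
    {\<lambda>d. delta (E, \<iota>, J) d + delta (E, \<iota>, J') d | E \<iota> J J' i j.
       is_diag L (E, \<iota>, J) \<and> i < length J \<and> j < length J \<and> i \<noteq> j \<and>
       J' = J[i := J ! j, j := J ! i]}
    \<union> {\<lambda>d. delta (E, \<iota>, J) d - delta (E', \<iota>', J') d | E \<iota> J E' \<iota>' J' \<phi>.
       is_diag L (E, \<iota>, J) \<and> is_diag L (E', \<iota>', J') \<and> embedding E E' \<phi> \<and>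
       rk E (top E) = rk E' (top E') \<and> (\<forall>x\<in>lcar L. \<iota>' x = \<phi> (\<iota> x)) \<and> J' = map \<phi> J}
    \<union> {delta (E, \<iota>, J) | E \<iota> J.
       is_diag L (E, \<iota>, J) \<and> join E (Fi L \<iota>) (Join E (set J)) \<noteq> top E}
    \<union> {delta (E, \<iota>, J) | E \<iota> J.
       is_diag L (E, \<iota>, J) \<and>
       (\<exists>E1 E2 \<psi>. geometric E1 \<and> geometric E2 \<and> nontrivial E1 \<and> nontrivial E2 \<and>
          bij_betw \<psi> (lcar E) (lcar E1 \<times> lcar E2) \<and>
          (\<forall>x\<in>lcar E. \<forall>y\<in>lcar E. lle E x y \<longleftrightarrow>
              lle E1 (fst (\<psi> x)) (fst (\<psi> y)) \<and> lle E2 (snd (\<psi> x)) (snd (\<psi> y))) \<and>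
          snd (\<psi> (Fi L \<iota>)) = bot E2)}
    \<union> {delta (E, \<iota>, J) | E \<iota> J.
       is_diag L (E, \<iota>, J) \<and>
       (\<exists>F. modular_flat E F \<and> lle E (Fi L \<iota>) F \<and>
          card {i. i < length J \<and> \<not> lle E (J ! i) F} = 2)}"

inductive_set Rspan :: "lat \<Rightarrow> (diag \<Rightarrow> rat) set" for L where
  zero: "(\<lambda>_. 0) \<in> Rspan L"
| step: "g \<in> Rgen L \<Longrightarrow> v \<in> Rspan L \<Longrightarrow> (\<lambda>d. c * g d + v d) \<in> Rspan L"

definition MDeq :: "lat \<Rightarrow> (diag \<Rightarrow> rat) \<Rightarrow> (diag \<Rightarrow> rat) \<Rightarrow> bool" where
  "MDeq L x y \<longleftrightarrow> (\<lambda>d. x d - y d) \<in> Rspan L"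

definition pushout :: "lat \<Rightarrow> lat \<Rightarrow> (nat \<Rightarrow> nat) \<Rightarrow> lat \<Rightarrow> (nat \<Rightarrow> nat) \<Rightarrow> lat" where
  "pushout L E1 \<iota>1 E2 \<iota>2 =
     \<lparr> lcar = {prod_encode (F1, F2) | F1 F2. F1 \<in> lcar E1 \<and> F2 \<in> lcar E2 \<and>
                 the_inv_into (lcar L) \<iota>1 (meet E1 F1 (Fi L \<iota>1)) =
                 the_inv_into (lcar L) \<iota>2 (meet E2 F2 (Fi L \<iota>2))},
       lle = (\<lambda>x y. lle E1 (fst (prod_decode x)) (fst (prod_decode y)) \<and>
                    lle E2 (snd (prod_decode x)) (snd (prod_decode y))) \<rparr>"

definition pincl :: "(nat \<Rightarrow> nat) \<Rightarrow> (nat \<Rightarrow> nat) \<Rightarrow> nat \<Rightarrow> nat" where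
  "pincl \<iota>1 \<iota>2 = (\<lambda>A. prod_encode (\<iota>1 A, \<iota>2 A))"

definition lift1 :: "lat \<Rightarrow> (nat \<Rightarrow> nat) \<Rightarrow> lat \<Rightarrow> (nat \<Rightarrow> nat) \<Rightarrow> nat \<Rightarrow> nat" where
  "lift1 L \<iota>1 E2 \<iota>2 H =
     (if H \<in> \<iota>1 ` lcar L then prod_encode (H, \<iota>2 (the_inv_into (lcar L) \<iota>1 H))
      else prod_encode (H, bot E2))"

definition lift2 :: "lat \<Rightarrow> lat \<Rightarrow> (nat \<Rightarrow> nat) \<Rightarrow> (nat \<Rightarrow> nat) \<Rightarrow> nat \<Rightarrow> nat" where
  "lift2 L E1 \<iota>1 \<iota>2 H =
     (if H \<in> \<iota>2 ` lcar L then prod_encode (\<iota>1 (the_inv_into (lcar L) \<iota>2 H), H)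
      else prod_encode (bot E1, H))"

fun dprod :: "lat \<Rightarrow> diag \<Rightarrow> diag \<Rightarrow> diag" where
  "dprod L (E1, \<iota>1, J1) (E2, \<iota>2, J2) =
     (pushout L E1 \<iota>1 E2 \<iota>2, pincl \<iota>1 \<iota>2,
      map (lift1 L \<iota>1 E2 \<iota>2) J1 @ map (lift2 L E1 \<iota>1 \<iota>2) J2)"

end

theory Submission
  imports Defs
begin

(*
  The pushout of two modular extensions E1, E2 of L is realised as the lattice of pairs
  (X1, X2) whose traces X1 \<sqinter> F1 and X2 \<sqinter> F2 are the same flat of L, ranked by
  rk X1 + rk X2 - rk (X1 \<sqinter> F1).  This rank is strictly monotone, grows by at most one
  when an atom is joined, and the atoms separate elements, which makes the pushout
  geometric; modularity of F1 and F2 makes F1 \<times> F2 modular in it.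
  Commutativity, associativity and the unit law come from explicit order isomorphisms
  between the pushouts (swapping, reassociating, forgetting the trivial factor), which
  relation (R2) identifies; reordering the word costs the sign of a block transposition
  by (R1), and deg \<Gamma> has the parity of the word length.  Degrees add because modularity
  of F gives deg \<Gamma> = |J| - 2 (rk (\<Squnion>J \<squnion> F) - rk L), and in the pushout \<Squnion>J \<squnion> F is the
  pair of the corresponding joins in E1 and E2.
*)

section \<open>Finite lattices\<close>

definition dual_lat :: "lat \<Rightarrow> lat" where
  "dual_lat L = \<lparr>lcar = lcar L, lle = (\<lambda>x y. lle L y x)\<rparr>"

lemma dual_lat_simps [simp]: "lcar (dual_lat L) = lcar L" "lle (dual_lat L) x y = lle L y x"
  unfolding dual_lat_def by simp_all

lemma is_lub_dual [simp]: "is_lub (dual_lat L) A x \<longleftrightarrow> is_glb L A x"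
  and is_glb_dual [simp]: "is_glb (dual_lat L) A x \<longleftrightarrow> is_lub L A x"
  unfolding is_glb_def is_lub_def by simp_all

lemma is_lattice_dual: assumes "is_lattice L" shows "is_lattice (dual_lat L)"
  using assms unfolding is_lattice_def dual_lat_simps is_lub_dual is_glb_dual
  by (elim conjE) (intro conjI; blast)

locale fin_lattice =
  fixes L :: lat
  assumes is_lat: "is_lattice L"
begin

abbreviation "C \<equiv> lcar L"
abbreviation le (infix "\<sqsubseteq>" 50) where "x \<sqsubseteq> y \<equiv> lle L x y"

lemma finite_carrier: "finite C" and carrier_nonempty: "C \<noteq> {}"
  using is_lat unfolding is_lattice_def by auto

lemma refl[intro, simp]: "x \<in> C \<Longrightarrow> x \<sqsubseteq> x"
  using is_lat unfolding is_lattice_def by auto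

lemma antisym: "x \<in> C \<Longrightarrow> y \<in> C \<Longrightarrow> x \<sqsubseteq> y \<Longrightarrow> y \<sqsubseteq> x \<Longrightarrow> x = y"
  using is_lat unfolding is_lattice_def by blast

lemma trans: "x \<in> C \<Longrightarrow> y \<in> C \<Longrightarrow> z \<in> C \<Longrightarrow> x \<sqsubseteq> y \<Longrightarrow> y \<sqsubseteq> z \<Longrightarrow> x \<sqsubseteq> z"
  using is_lat unfolding is_lattice_def by blast

lemma lub_pair_exists: "x \<in> C \<Longrightarrow> y \<in> C \<Longrightarrow> \<exists>z. is_lub L {x, y} z"
  using is_lat unfolding is_lattice_def by blast

lemma lub_unique: "is_lub L A x \<Longrightarrow> is_lub L A y \<Longrightarrow> x = y"
  unfolding is_lub_def using antisym by blast

lemma glb_unique: "is_glb L A x \<Longrightarrow> is_glb L A y \<Longrightarrow> x = y"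
  unfolding is_glb_def using antisym by blast

lemma lub_exists_nonempty: "finite A \<Longrightarrow> A \<noteq> {} \<Longrightarrow> A \<subseteq> C \<Longrightarrow> \<exists>z. is_lub L A z"
proof (induction A rule: finite_ne_induct)
  case (singleton x)
  then show ?case unfolding is_lub_def by auto
next
  case (insert x F)
  then obtain z where z: "is_lub L F z" by auto
  then have zC: "z \<in> C" unfolding is_lub_def by auto
  obtain w where w: "is_lub L {x, z} w" using lub_pair_exists zC insert.prems by blast
  have "is_lub L (insert x F) w"
    unfolding is_lub_def
  proof (intro conjI ballI impI)
    show wC: "w \<in> C" using w unfolding is_lub_def by auto
    fix a assume "a \<in> insert x F"
    then show "a \<sqsubseteq> w"
    proof
      assume "a \<in> F"
      then show ?thesis using z w trans[of a z w] insert.prems zC wC unfolding is_lub_def by auto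
    qed (use w in \<open>auto simp: is_lub_def\<close>)
  next
    fix y assume "y \<in> C" and "\<forall>a\<in>insert x F. a \<sqsubseteq> y"
    then show "w \<sqsubseteq> y" using z w unfolding is_lub_def by auto
  qed
  then show ?case by blast
qed

lemma glb_exists_nonempty: "finite A \<Longrightarrow> A \<noteq> {} \<Longrightarrow> A \<subseteq> C \<Longrightarrow> \<exists>z. is_glb L A z"
proof -
  interpret D: fin_lattice "dual_lat L" by (rule fin_lattice.intro, rule is_lattice_dual, rule is_lat)
  show "finite A \<Longrightarrow> A \<noteq> {} \<Longrightarrow> A \<subseteq> C \<Longrightarrow> \<exists>z. is_glb L A z"
    using D.lub_exists_nonempty by simp
qed

lemma lub_exists: assumes "A \<subseteq> C" shows "\<exists>z. is_lub L A z"
proof (cases "A = {}")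
  case True
  obtain z where "is_glb L C z" using glb_exists_nonempty finite_carrier carrier_nonempty by blast
  then have "is_lub L A z" using True unfolding is_glb_def is_lub_def by auto
  then show ?thesis by blast
next
  case False
  have "finite A" using assms finite_carrier by (rule rev_finite_subset[rotated])
  then show ?thesis using lub_exists_nonempty[OF _ False assms] by blast
qed

lemma glb_exists: assumes "A \<subseteq> C" shows "\<exists>z. is_glb L A z"
proof -
  interpret D: fin_lattice "dual_lat L" by (rule fin_lattice.intro, rule is_lattice_dual, rule is_lat)
  show ?thesis using D.lub_exists assms by simp
qed

lemma Join_lub: assumes "A \<subseteq> C" shows "is_lub L A (Join L A)"
proof -
  obtain z where z: "is_lub L A z" using lub_exists[OF assms] by blast
  have "Join L A = z" unfolding Join_def
    by (rule the_equality[where P="is_lub L A", OF z]) (rule lub_unique[OF _ z])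
  then show ?thesis using z by simp
qed

lemma Meet_glb: assumes "A \<subseteq> C" shows "is_glb L A (Meet L A)"
proof -
  obtain z where z: "is_glb L A z" using glb_exists[OF assms] by blast
  have "Meet L A = z" unfolding Meet_def
    by (rule the_equality[where P="is_glb L A", OF z]) (rule glb_unique[OF _ z])
  then show ?thesis using z by simp
qed

lemma Join_eq: "is_lub L A x \<Longrightarrow> Join L A = x"
  unfolding Join_def using lub_unique by blast

lemma Meet_eq: "is_glb L A x \<Longrightarrow> Meet L A = x"
  unfolding Meet_def using glb_unique by blast

lemma Join_in: "A \<subseteq> C \<Longrightarrow> Join L A \<in> C"
  using Join_lub unfolding is_lub_def by blast
lemma Join_ub: "A \<subseteq> C \<Longrightarrow> a \<in> A \<Longrightarrow> a \<sqsubseteq> Join L A"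
  using Join_lub unfolding is_lub_def by blast
lemma Join_least: "A \<subseteq> C \<Longrightarrow> y \<in> C \<Longrightarrow> (\<And>a. a \<in> A \<Longrightarrow> a \<sqsubseteq> y) \<Longrightarrow> Join L A \<sqsubseteq> y"
  using Join_lub unfolding is_lub_def by blast
lemma Join_le_iff: "A \<subseteq> C \<Longrightarrow> y \<in> C \<Longrightarrow> Join L A \<sqsubseteq> y \<longleftrightarrow> (\<forall>a\<in>A. a \<sqsubseteq> y)"
  by (meson Join_in Join_least Join_ub subsetD trans)

lemma Meet_in: "A \<subseteq> C \<Longrightarrow> Meet L A \<in> C"
  using Meet_glb unfolding is_glb_def by blast
lemma Meet_lb: "A \<subseteq> C \<Longrightarrow> a \<in> A \<Longrightarrow> Meet L A \<sqsubseteq> a"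
  using Meet_glb unfolding is_glb_def by blast
lemma Meet_greatest: "A \<subseteq> C \<Longrightarrow> y \<in> C \<Longrightarrow> (\<And>a. a \<in> A \<Longrightarrow> y \<sqsubseteq> a) \<Longrightarrow> y \<sqsubseteq> Meet L A"
  using Meet_glb unfolding is_glb_def by blast

abbreviation ljoin (infixl "\<squnion>" 65) where "x \<squnion> y \<equiv> join L x y"
abbreviation lmeet (infixl "\<sqinter>" 70) where "x \<sqinter> y \<equiv> meet L x y"

lemma join_in[simp, intro]: "x \<in> C \<Longrightarrow> y \<in> C \<Longrightarrow> x \<squnion> y \<in> C"
  unfolding join_def by (rule Join_in) auto
lemma join_ub1: "x \<in> C \<Longrightarrow> y \<in> C \<Longrightarrow> x \<sqsubseteq> x \<squnion> y"
  unfolding join_def by (rule Join_ub) auto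
lemma join_ub2: "x \<in> C \<Longrightarrow> y \<in> C \<Longrightarrow> y \<sqsubseteq> x \<squnion> y"
  unfolding join_def by (rule Join_ub) auto
lemma join_least: "x \<in> C \<Longrightarrow> y \<in> C \<Longrightarrow> z \<in> C \<Longrightarrow> x \<sqsubseteq> z \<Longrightarrow> y \<sqsubseteq> z \<Longrightarrow> x \<squnion> y \<sqsubseteq> z"
  unfolding join_def by (rule Join_least) auto
lemma meet_in[simp, intro]: "x \<in> C \<Longrightarrow> y \<in> C \<Longrightarrow> x \<sqinter> y \<in> C"
  unfolding meet_def by (rule Meet_in) auto
lemma meet_lb1: "x \<in> C \<Longrightarrow> y \<in> C \<Longrightarrow> x \<sqinter> y \<sqsubseteq> x"
  unfolding meet_def by (rule Meet_lb) auto
lemma meet_lb2: "x \<in> C \<Longrightarrow> y \<in> C \<Longrightarrow> x \<sqinter> y \<sqsubseteq> y"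
  unfolding meet_def by (rule Meet_lb) auto
lemma meet_greatest: "x \<in> C \<Longrightarrow> y \<in> C \<Longrightarrow> z \<in> C \<Longrightarrow> z \<sqsubseteq> x \<Longrightarrow> z \<sqsubseteq> y \<Longrightarrow> z \<sqsubseteq> x \<sqinter> y"
  unfolding meet_def by (rule Meet_greatest) auto

lemma join_eq: "x \<in> C \<Longrightarrow> y \<in> C \<Longrightarrow> z \<in> C \<Longrightarrow> x \<sqsubseteq> z \<Longrightarrow> y \<sqsubseteq> z
  \<Longrightarrow> (\<And>w. w \<in> C \<Longrightarrow> x \<sqsubseteq> w \<Longrightarrow> y \<sqsubseteq> w \<Longrightarrow> z \<sqsubseteq> w) \<Longrightarrow> x \<squnion> y = z"
  unfolding join_def by (rule Join_eq) (auto simp: is_lub_def)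
lemma meet_eq: "x \<in> C \<Longrightarrow> y \<in> C \<Longrightarrow> z \<in> C \<Longrightarrow> z \<sqsubseteq> x \<Longrightarrow> z \<sqsubseteq> y
  \<Longrightarrow> (\<And>w. w \<in> C \<Longrightarrow> w \<sqsubseteq> x \<Longrightarrow> w \<sqsubseteq> y \<Longrightarrow> w \<sqsubseteq> z) \<Longrightarrow> x \<sqinter> y = z"
  unfolding meet_def by (rule Meet_eq) (auto simp: is_glb_def)

lemma join_comm: "x \<squnion> y = y \<squnion> x"
  unfolding join_def by (simp add: insert_commute)
lemma meet_comm: "x \<sqinter> y = y \<sqinter> x"
  unfolding meet_def by (simp add: insert_commute)

lemma join_le_iff: "x \<in> C \<Longrightarrow> y \<in> C \<Longrightarrow> z \<in> C \<Longrightarrow> x \<squnion> y \<sqsubseteq> z \<longleftrightarrow> x \<sqsubseteq> z \<and> y \<sqsubseteq> z"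
  by (meson join_in join_least join_ub1 join_ub2 local.trans)
lemma le_meet_iff: "x \<in> C \<Longrightarrow> y \<in> C \<Longrightarrow> z \<in> C \<Longrightarrow> z \<sqsubseteq> x \<sqinter> y \<longleftrightarrow> z \<sqsubseteq> x \<and> z \<sqsubseteq> y"
  by (meson meet_in meet_greatest meet_lb1 meet_lb2 local.trans)

lemma join_absorb: "x \<in> C \<Longrightarrow> y \<in> C \<Longrightarrow> x \<sqsubseteq> y \<Longrightarrow> x \<squnion> y = y"
  by (rule join_eq) auto
lemma join_absorb2: "x \<in> C \<Longrightarrow> y \<in> C \<Longrightarrow> y \<sqsubseteq> x \<Longrightarrow> x \<squnion> y = x"
  by (rule join_eq) auto
lemma meet_absorb: "x \<in> C \<Longrightarrow> y \<in> C \<Longrightarrow> x \<sqsubseteq> y \<Longrightarrow> x \<sqinter> y = x"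
  by (rule meet_eq) auto
lemma meet_absorb2: "x \<in> C \<Longrightarrow> y \<in> C \<Longrightarrow> y \<sqsubseteq> x \<Longrightarrow> x \<sqinter> y = y"
  by (rule meet_eq) auto
lemma le_join_iff: "x \<in> C \<Longrightarrow> y \<in> C \<Longrightarrow> x \<sqsubseteq> y \<longleftrightarrow> x \<squnion> y = y"
  using join_absorb join_ub1 by metis

lemma join_assoc: assumes C: "x \<in> C" "y \<in> C" "z \<in> C" shows "x \<squnion> y \<squnion> z = x \<squnion> (y \<squnion> z)"
proof -
  have T: "x \<squnion> (y \<squnion> z) \<in> C" "y \<squnion> z \<in> C" "x \<squnion> y \<in> C" using C by auto
  have 1: "x \<sqsubseteq> x \<squnion> (y \<squnion> z)" "y \<squnion> z \<sqsubseteq> x \<squnion> (y \<squnion> z)"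
    using join_ub1 join_ub2 C T by auto
  have 2: "y \<sqsubseteq> y \<squnion> z" "z \<sqsubseteq> y \<squnion> z" using join_ub1 join_ub2 C by auto
  show ?thesis
  proof (rule join_eq)
    show "x \<squnion> y \<sqsubseteq> x \<squnion> (y \<squnion> z)"
      using join_least[OF C(1,2) T(1) 1(1)] trans[OF C(2) T(2) T(1) 2(1) 1(2)] by blast
    show "z \<sqsubseteq> x \<squnion> (y \<squnion> z)" using trans[OF C(3) T(2) T(1) 2(2) 1(2)] .
    fix w assume w: "w \<in> C" "x \<squnion> y \<sqsubseteq> w" "z \<sqsubseteq> w"
    have "x \<sqsubseteq> w" "y \<sqsubseteq> w" using w join_le_iff C by auto
    then show "x \<squnion> (y \<squnion> z) \<sqsubseteq> w" using w join_le_iff C T by auto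
  qed (use C T in auto)
qed
lemma join_mono: "x \<in> C \<Longrightarrow> y \<in> C \<Longrightarrow> x' \<in> C \<Longrightarrow> y' \<in> C \<Longrightarrow> x \<sqsubseteq> x' \<Longrightarrow> y \<sqsubseteq> y' \<Longrightarrow> x \<squnion> y \<sqsubseteq> x' \<squnion> y'"
  by (simp add: join_le_iff) (meson join_in join_ub1 join_ub2 local.trans)
lemma meet_mono: "x \<in> C \<Longrightarrow> y \<in> C \<Longrightarrow> x' \<in> C \<Longrightarrow> y' \<in> C \<Longrightarrow> x \<sqsubseteq> x' \<Longrightarrow> y \<sqsubseteq> y' \<Longrightarrow> x \<sqinter> y \<sqsubseteq> x' \<sqinter> y'"
  by (simp add: le_meet_iff) (meson meet_in meet_lb1 meet_lb2 local.trans)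

lemma bot_in[simp, intro]: "bot L \<in> C"
  unfolding bot_def by (rule Join_in) auto
lemma bot_le: "x \<in> C \<Longrightarrow> bot L \<sqsubseteq> x"
  unfolding bot_def using Join_lub[of "{}"] unfolding is_lub_def by auto
lemma top_in[simp, intro]: "top L \<in> C"
  unfolding top_def by (rule Meet_in) auto
lemma le_top: "x \<in> C \<Longrightarrow> x \<sqsubseteq> top L"
  unfolding top_def using Meet_glb[of "{}"] unfolding is_glb_def by auto
lemma bot_eq: "b \<in> C \<Longrightarrow> (\<And>x. x \<in> C \<Longrightarrow> b \<sqsubseteq> x) \<Longrightarrow> bot L = b"
  unfolding bot_def by (rule Join_eq) (auto simp: is_lub_def)
lemma top_eq: "b \<in> C \<Longrightarrow> (\<And>x. x \<in> C \<Longrightarrow> x \<sqsubseteq> b) \<Longrightarrow> top L = b"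
  unfolding top_def by (rule Meet_eq) (auto simp: is_glb_def)

lemma join_idem: "x \<in> C \<Longrightarrow> x \<squnion> x = x"
  using join_absorb[OF _ _ refl] by simp

lemma join_join_absorb: "x \<in> C \<Longrightarrow> y \<in> C \<Longrightarrow> z \<in> C \<Longrightarrow> y \<sqsubseteq> z \<Longrightarrow> x \<squnion> y \<squnion> z = x \<squnion> z"
  using join_assoc[of x y z] join_absorb[of y z] by simp

lemma join_absorb_below:
  assumes "x \<in> C" "y \<in> C" "a \<in> C" "y \<sqsubseteq> x"
  shows "y \<squnion> a \<squnion> x = x \<squnion> a"
proof -
  have "y \<squnion> a \<squnion> x = x \<squnion> y \<squnion> a" using join_comm[of "y \<squnion> a" x] join_assoc[of x y a] assms by simp
  also have "x \<squnion> y = x" using join_absorb2 assms by simp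
  finally show ?thesis .
qed

lemma modular_ineq:
  assumes "x \<in> C" "f \<in> C" "a \<in> C" "a \<sqsubseteq> f"
  shows "(x \<sqinter> f) \<squnion> a \<sqsubseteq> (x \<squnion> a) \<sqinter> f"
proof (rule join_least)
  show "x \<sqinter> f \<sqsubseteq> (x \<squnion> a) \<sqinter> f" using meet_mono join_ub1 assms by simp
  show "a \<sqsubseteq> (x \<squnion> a) \<sqinter> f" using meet_greatest join_ub2 assms by simp
qed (use assms in auto)

lemma meet_meet_right: assumes C: "x \<in> C" "y \<in> C" "f \<in> C"
  shows "(x \<sqinter> f) \<sqinter> (y \<sqinter> f) = (x \<sqinter> y) \<sqinter> f"
proof (rule meet_eq)
  show "x \<sqinter> f \<in> C" "y \<sqinter> f \<in> C" "x \<sqinter> y \<sqinter> f \<in> C" using C by auto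
  have z1: "x \<sqinter> y \<sqinter> f \<sqsubseteq> x \<sqinter> y" "x \<sqinter> y \<sqinter> f \<sqsubseteq> f" using meet_lb1 meet_lb2 C by auto
  have z2: "x \<sqinter> y \<sqsubseteq> x" "x \<sqinter> y \<sqsubseteq> y" using meet_lb1 meet_lb2 C by auto
  have zx: "x \<sqinter> y \<sqinter> f \<sqsubseteq> x" using trans[OF _ _ _ z1(1) z2(1)] C by simp
  have zy: "x \<sqinter> y \<sqinter> f \<sqsubseteq> y" using trans[OF _ _ _ z1(1) z2(2)] C by simp
  show "x \<sqinter> y \<sqinter> f \<sqsubseteq> x \<sqinter> f" using meet_greatest[OF C(1,3) _ zx z1(2)] C by simp
  show "x \<sqinter> y \<sqinter> f \<sqsubseteq> y \<sqinter> f" using meet_greatest[OF C(2,3) _ zy z1(2)] C by simp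
  fix w assume w: "w \<in> C" "w \<sqsubseteq> x \<sqinter> f" "w \<sqsubseteq> y \<sqinter> f"
  have "w \<sqsubseteq> x" "w \<sqsubseteq> f" "w \<sqsubseteq> y" using w le_meet_iff C by auto
  then show "w \<sqsubseteq> x \<sqinter> y \<sqinter> f" using le_meet_iff C w by auto
qed

lemma covers_in: "covers L x y \<Longrightarrow> x \<in> C \<and> y \<in> C \<and> x \<sqsubseteq> y \<and> x \<noteq> y"
  unfolding covers_def by blast

lemma coversI: "x \<in> C \<Longrightarrow> y \<in> C \<Longrightarrow> x \<sqsubseteq> y \<Longrightarrow> x \<noteq> y \<Longrightarrow>
   (\<And>z. z \<in> C \<Longrightarrow> x \<sqsubseteq> z \<Longrightarrow> z \<sqsubseteq> y \<Longrightarrow> z = x \<or> z = y) \<Longrightarrow> covers L x y"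
  unfolding covers_def by blast

lemma coversD: "covers L x y \<Longrightarrow> z \<in> C \<Longrightarrow> x \<sqsubseteq> z \<Longrightarrow> z \<sqsubseteq> y \<Longrightarrow> z = x \<or> z = y"
  unfolding covers_def by blast

lemma card_below_less:
  assumes "w \<in> C" "z \<in> C" "w \<sqsubseteq> z" "w \<noteq> z"
  shows "card {u \<in> C. u \<sqsubseteq> w} < card {u \<in> C. u \<sqsubseteq> z}"
proof (rule psubset_card_mono)
  show "finite {u \<in> C. u \<sqsubseteq> z}" using finite_carrier by simp
  have "{u \<in> C. u \<sqsubseteq> w} \<subseteq> {u \<in> C. u \<sqsubseteq> z}"
  proof
    fix u assume "u \<in> {u \<in> C. u \<sqsubseteq> w}"
    then have "u \<in> C" "u \<sqsubseteq> w" by auto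
    then show "u \<in> {u \<in> C. u \<sqsubseteq> z}" using trans[OF _ assms(1,2) _ assms(3)] by blast
  qed
  moreover have "z \<in> {u \<in> C. u \<sqsubseteq> z}" using assms by auto
  moreover have "z \<notin> {u \<in> C. u \<sqsubseteq> w}" using antisym[OF assms(1,2) assms(3)] assms(4) by auto
  ultimately show "{u \<in> C. u \<sqsubseteq> w} \<subset> {u \<in> C. u \<sqsubseteq> z}" by blast
qed

lemma cover_below_exists:
  assumes xC: "x \<in> C" and yC: "y \<in> C" and xy: "x \<sqsubseteq> y" "x \<noteq> y"
  shows "\<exists>w. x \<sqsubseteq> w \<and> covers L w y"
proof -
  define S where "S = {z \<in> C. x \<sqsubseteq> z \<and> z \<sqsubseteq> y \<and> z \<noteq> y}"
  define f where "f = (\<lambda>w. card {z \<in> C. z \<sqsubseteq> w})"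
  have finS: "finite S" using finite_carrier unfolding S_def by simp
  have xS: "x \<in> S" using assms unfolding S_def by auto
  then have neS: "f ` S \<noteq> {}" by blast
  have "Max (f ` S) \<in> f ` S" using Max_in[OF finite_imageI[OF finS] neS] .
  then obtain w where wS: "w \<in> S" and wmax: "f w = Max (f ` S)" by auto
  have wge: "\<And>w'. w' \<in> S \<Longrightarrow> f w' \<le> f w"
    using wmax finS by simp
  have wC: "w \<in> C" and xw: "x \<sqsubseteq> w" and wy: "w \<sqsubseteq> y" "w \<noteq> y" using wS unfolding S_def by auto
  have "covers L w y"
  proof (rule coversI[OF wC yC wy])
    fix z assume zC: "z \<in> C" and wz: "w \<sqsubseteq> z" and zy: "z \<sqsubseteq> y"
    show "z = w \<or> z = y"
    proof (rule ccontr)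
      assume "\<not> (z = w \<or> z = y)"
      then have ne: "z \<noteq> w" "z \<noteq> y" by auto
      have "x \<sqsubseteq> z" using trans[OF xC wC zC xw wz] .
      then have "z \<in> S" using zC zy ne unfolding S_def by auto
      then have "f z \<le> f w" by (rule wge)
      moreover have "f w < f z" unfolding f_def using card_below_less[OF wC zC wz] ne by auto
      ultimately show False by simp
    qed
  qed
  then show ?thesis using xw by blast
qed

lemma max_chain_snoc:
  assumes mc: "max_chain L xs x" and cv: "covers L x y"
  shows "max_chain L (xs @ [y]) y"
  unfolding max_chain_def
proof (intro conjI allI impI)
  have ne: "xs \<noteq> []" "hd xs = bot L" "last xs = x"
    and st: "\<And>i. Suc i < length xs \<Longrightarrow> covers L (xs ! i) (xs ! Suc i)"
    using mc unfolding max_chain_def by auto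
  show "xs @ [y] \<noteq> []" by simp
  show "hd (xs @ [y]) = bot L" using ne by simp
  show "last (xs @ [y]) = y" by simp
  fix i assume i: "Suc i < length (xs @ [y])"
  show "covers L ((xs @ [y]) ! i) ((xs @ [y]) ! Suc i)"
  proof (cases "Suc i < length xs")
    case True
    then show ?thesis using st[OF True] by (simp add: nth_append)
  next
    case False
    then have si: "Suc i = length xs" using i by simp
    then have il: "i < length xs" "i = length xs - 1" by simp_all
    have "xs ! i = last xs" using il(2) last_conv_nth[OF ne(1)] by simp
    then have "(xs @ [y]) ! i = x" using ne il(1) by (simp add: nth_append)
    moreover have "(xs @ [y]) ! Suc i = y" using si by (simp add: nth_append)
    ultimately show ?thesis using cv by simp
  qed
qed

lemma max_chain_bot: "max_chain L [bot L] (bot L)"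
  unfolding max_chain_def by simp

lemma max_chain_exists: "F \<in> C \<Longrightarrow> \<exists>xs. max_chain L xs F"
proof (induction "card {z \<in> C. z \<sqsubseteq> F}" arbitrary: F rule: less_induct)
  case less
  show ?case
  proof (cases "F = bot L")
    case True
    then show ?thesis using max_chain_bot by blast
  next
    case False
    obtain w where "bot L \<sqsubseteq> w" and cv: "covers L w F"
      using cover_below_exists[OF bot_in less.prems bot_le[OF less.prems]] False by metis
    have wC: "w \<in> C" and wF: "w \<sqsubseteq> F" "w \<noteq> F" using covers_in[OF cv] by auto
    have "card {z \<in> C. z \<sqsubseteq> w} < card {z \<in> C. z \<sqsubseteq> F}"
      using card_below_less[OF wC less.prems wF] .
    then obtain xs where "max_chain L xs w" using less.hyps wC by blast
    then show ?thesis using max_chain_snoc cv by blast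
  qed
qed

lemma length_max_chain:
  assumes cov: "\<And>x y. covers L x y \<Longrightarrow> r y = Suc (r x)" and r0: "r (bot L) = 0"
    and mc: "max_chain L xs F"
  shows "length xs = Suc (r F)"
proof -
  have ne: "xs \<noteq> []" "hd xs = bot L" "last xs = F"
    and st: "\<And>i. Suc i < length xs \<Longrightarrow> covers L (xs ! i) (xs ! Suc i)"
    using mc unfolding max_chain_def by auto
  have "\<forall>i. i < length xs \<longrightarrow> r (xs ! i) = i"
  proof
    fix i show "i < length xs \<longrightarrow> r (xs ! i) = i"
    proof (induction i)
      case 0
      then show ?case using ne hd_conv_nth[OF ne(1)] r0 by simp
    next
      case (Suc i)
      then show ?case using st[of i] cov by auto
    qed
  qed
  moreover have "length xs - 1 < length xs" using ne by simp
  ultimately have "r (xs ! (length xs - 1)) = length xs - 1" by blast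
  then have "r F = length xs - 1" using last_conv_nth[OF ne(1)] ne by simp
  then show ?thesis using ne by simp
qed

lemma rk_cover:
  assumes rk: "ranked L" and cv: "covers L x y"
  shows "rk L y = Suc (rk L x)"
proof -
  have xC: "x \<in> C" and yC: "y \<in> C" using covers_in[OF cv] by auto
  obtain xs where xs: "max_chain L xs x" using max_chain_exists[OF xC] by blast
  have ys: "max_chain L (xs @ [y]) y" using max_chain_snoc[OF xs cv] .
  have sx: "max_chain L (SOME zs. max_chain L zs x) x" using someI[of "\<lambda>zs. max_chain L zs x"] xs by blast
  have sy: "max_chain L (SOME zs. max_chain L zs y) y" using someI[of "\<lambda>zs. max_chain L zs y"] ys by blast
  have lx: "length (SOME zs. max_chain L zs x) = length xs"
    using rk xC sx xs unfolding ranked_def by blast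
  have ly: "length (SOME zs. max_chain L zs y) = length (xs @ [y])"
    using rk yC sy ys unfolding ranked_def by blast
  have "xs \<noteq> []" using xs unfolding max_chain_def by simp
  then show ?thesis unfolding rk_def using lx ly by simp
qed

lemma rk_bot:
  assumes rk: "ranked L" shows "rk L (bot L) = 0"
proof -
  have sx: "max_chain L (SOME zs. max_chain L zs (bot L)) (bot L)"
    using someI[of "\<lambda>zs. max_chain L zs (bot L)"] max_chain_bot by blast
  have "length (SOME zs. max_chain L zs (bot L)) = length [bot L]"
    using rk sx max_chain_bot unfolding ranked_def by blast
  then show ?thesis unfolding rk_def by simp
qed

lemma strict_mono_of_cover:
  assumes cov: "\<And>x y. covers L x y \<Longrightarrow> r y = Suc (r x)"
  shows "x \<in> C \<Longrightarrow> y \<in> C \<Longrightarrow> x \<sqsubseteq> y \<Longrightarrow> x \<noteq> y \<Longrightarrow> r x < r y"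
proof (induction "card {z \<in> C. z \<sqsubseteq> y}" arbitrary: y rule: less_induct)
  case less
  obtain w where xw: "x \<sqsubseteq> w" and cv: "covers L w y" using cover_below_exists less.prems by blast
  have wC: "w \<in> C" and wy: "w \<sqsubseteq> y" "w \<noteq> y" using covers_in[OF cv] by auto
  have c: "card {z \<in> C. z \<sqsubseteq> w} < card {z \<in> C. z \<sqsubseteq> y}" using card_below_less[OF wC less.prems(2) wy] .
  have "r x \<le> r w"
  proof (cases "x = w")
    case False
    then show ?thesis using less.hyps[OF c _ wC] less.prems xw by simp
  qed simp
  then show ?case using cov[OF cv] by simp
qed

end

section \<open>Geometric lattices via rank functions\<close>

locale geometric_rank = fin_lattice +
  fixes r :: "nat \<Rightarrow> nat"
  assumes r_bot: "r (bot L) = 0"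
    and r_strict_mono: "x \<in> C \<Longrightarrow> y \<in> C \<Longrightarrow> x \<sqsubseteq> y \<Longrightarrow> x \<noteq> y \<Longrightarrow> r x < r y"
    and r_join_atom: "x \<in> C \<Longrightarrow> q \<in> atoms L \<Longrightarrow> r (x \<squnion> q) \<le> Suc (r x)"
    and atoms_separate: "x \<in> C \<Longrightarrow> y \<in> C \<Longrightarrow> \<not> x \<sqsubseteq> y \<Longrightarrow> \<exists>q\<in>atoms L. q \<sqsubseteq> x \<and> \<not> q \<sqsubseteq> y"
begin

lemma atoms_in: "q \<in> atoms L \<Longrightarrow> q \<in> C"
  unfolding atoms_def by auto

lemma r_mono: assumes "x \<in> C" "y \<in> C" "x \<sqsubseteq> y" shows "r x \<le> r y"
proof (cases "x = y")
  case False
  then show ?thesis using r_strict_mono[OF assms False] by simp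
qed simp

lemma cover_by_atom:
  assumes cv: "covers L x y"
  shows "\<exists>q\<in>atoms L. y = x \<squnion> q"
proof -
  have xC: "x \<in> C" and yC: "y \<in> C" and xy: "x \<sqsubseteq> y" "x \<noteq> y" using covers_in[OF cv] by auto
  have "\<not> y \<sqsubseteq> x" using antisym[OF xC yC xy(1)] xy(2) by auto
  then obtain q where q: "q \<in> atoms L" "q \<sqsubseteq> y" "\<not> q \<sqsubseteq> x" using atoms_separate[OF yC xC] by blast
  have qC: "q \<in> C" using atoms_in q(1) .
  have jC: "x \<squnion> q \<in> C" using xC qC by simp
  have "x \<sqsubseteq> x \<squnion> q" using join_ub1[OF xC qC] .
  moreover have "x \<squnion> q \<sqsubseteq> y" using join_least[OF xC qC yC xy(1) q(2)] .
  moreover have "x \<squnion> q \<noteq> x" using join_ub2[OF xC qC] q(3) by auto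
  ultimately have "x \<squnion> q = y" using coversD[OF cv jC] by blast
  then show ?thesis using q(1) by blast
qed

lemma r_cover: "covers L x y \<Longrightarrow> r y = Suc (r x)"
proof -
  assume cv: "covers L x y"
  have xC: "x \<in> C" and yC: "y \<in> C" and xy: "x \<sqsubseteq> y" "x \<noteq> y" using covers_in[OF cv] by auto
  obtain q where q: "q \<in> atoms L" "y = x \<squnion> q" using cover_by_atom[OF cv] by blast
  have "r y \<le> Suc (r x)" using r_join_atom[OF xC q(1)] q(2) by simp
  moreover have "r x < r y" using r_strict_mono[OF xC yC xy] .
  ultimately show ?thesis by simp
qed

lemma ranked_L: "ranked L"
  unfolding ranked_def using length_max_chain[where r=r, OF r_cover r_bot] by simp

lemma rk_eq_r: assumes "F \<in> C" shows "rk L F = r F"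
proof -
  obtain xs where xs: "max_chain L xs F" using max_chain_exists[OF assms] by blast
  have "max_chain L (SOME zs. max_chain L zs F) F" using someI[of "\<lambda>zs. max_chain L zs F"] xs by blast
  then show ?thesis unfolding rk_def using length_max_chain[where r=r, OF r_cover r_bot] by simp
qed

lemma r_semimodular_step:
  assumes xC: "x \<in> C"
  shows "u \<in> C \<Longrightarrow> v \<in> C \<Longrightarrow> u \<sqsubseteq> v \<Longrightarrow> r (v \<squnion> x) + r u \<le> r (u \<squnion> x) + r v"
proof (induction "card {z \<in> C. z \<sqsubseteq> v}" arbitrary: v rule: less_induct)
  case less
  show ?case
  proof (cases "u = v")
    case False
    obtain w where uw: "u \<sqsubseteq> w" and cv: "covers L w v" using cover_below_exists less.prems False by blast
    have wC: "w \<in> C" and wv: "w \<sqsubseteq> v" "w \<noteq> v" using covers_in[OF cv] by auto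
    have c: "card {z \<in> C. z \<sqsubseteq> w} < card {z \<in> C. z \<sqsubseteq> v}" using card_below_less[OF wC less.prems(2) wv] .
    have IH: "r (w \<squnion> x) + r u \<le> r (u \<squnion> x) + r w" using less.hyps[OF c less.prems(1) wC uw] .
    obtain q where q: "q \<in> atoms L" "v = w \<squnion> q" using cover_by_atom[OF cv] by blast
    have qC: "q \<in> C" using atoms_in q(1) .
    have "v \<squnion> x = (w \<squnion> x) \<squnion> q"
      using q(2) join_assoc[OF wC qC xC] join_assoc[OF wC xC qC] join_comm[of q x] by simp
    then have "r (v \<squnion> x) \<le> Suc (r (w \<squnion> x))" using r_join_atom[OF _ q(1)] wC xC by simp
    moreover have "r v = Suc (r w)" using r_cover[OF cv] .
    ultimately show ?thesis using IH by simp
  qed simp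
qed

lemma r_semimodular: assumes "x \<in> C" "y \<in> C" shows "r (x \<sqinter> y) + r (x \<squnion> y) \<le> r x + r y"
proof -
  have mC: "x \<sqinter> y \<in> C" using assms by simp
  have "r (y \<squnion> x) + r (x \<sqinter> y) \<le> r ((x \<sqinter> y) \<squnion> x) + r y"
    using r_semimodular_step[OF assms(1) mC assms(2) meet_lb2[OF assms]] .
  moreover have "(x \<sqinter> y) \<squnion> x = x" using join_absorb[OF mC assms(1) meet_lb1[OF assms]] .
  ultimately show ?thesis using join_comm[of y x] by simp
qed

lemma Join_atoms_below: assumes FC: "F \<in> C" shows "Join L {q \<in> atoms L. q \<sqsubseteq> F} = F"
proof -
  let ?A = "{q \<in> atoms L. q \<sqsubseteq> F}"
  have AC: "?A \<subseteq> C" using atoms_in by auto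
  have JC: "Join L ?A \<in> C" using Join_in[OF AC] .
  have 1: "Join L ?A \<sqsubseteq> F" using Join_least[OF AC FC] by blast
  have 2: "F \<sqsubseteq> Join L ?A"
  proof (rule ccontr)
    assume "\<not> F \<sqsubseteq> Join L ?A"
    then obtain q where q: "q \<in> atoms L" "q \<sqsubseteq> F" "\<not> q \<sqsubseteq> Join L ?A" using atoms_separate[OF FC JC] by blast
    then have "q \<in> ?A" by simp
    then show False using Join_ub[OF AC] q(3) by blast
  qed
  show ?thesis using antisym[OF JC FC 1 2] .
qed

lemma geometric_L: "geometric L"
  unfolding geometric_def
proof (intro conjI)
  show "is_lattice L" by (rule is_lat)
  show "ranked L" by (rule ranked_L)
  show "atomic L" unfolding atomic_def
  proof
    fix F assume "F \<in> C"
    then have e: "F = Join L {q \<in> atoms L. q \<sqsubseteq> F}" using Join_atoms_below[of F] by simp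
    have s: "{q \<in> atoms L. q \<sqsubseteq> F} \<subseteq> atoms L" by (rule Collect_restrict)
    show "\<exists>A\<subseteq>atoms L. F = Join L A" using e s by blast
  qed
  show "semimodular L" unfolding semimodular_def
    using r_semimodular rk_eq_r by simp
qed

lemma r_atom: assumes "q \<in> atoms L" shows "r q = 1"
proof -
  have "covers L (bot L) q" using assms unfolding atoms_def by simp
  then have "r q = Suc (r (bot L))" by (rule r_cover)
  then show ?thesis using r_bot by simp
qed

lemma atoms_iff_r: "q \<in> atoms L \<longleftrightarrow> q \<in> C \<and> r q = 1"
proof
  assume "q \<in> C \<and> r q = 1"
  then have qC: "q \<in> C" and rq: "r q = 1" by auto
  have ne: "bot L \<noteq> q" using rq r_bot by auto
  have "covers L (bot L) q"
  proof (rule coversI[OF bot_in qC bot_le[OF qC] ne])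
    fix z assume zC: "z \<in> C" and bz: "bot L \<sqsubseteq> z" and zq: "z \<sqsubseteq> q"
    show "z = bot L \<or> z = q"
    proof (rule ccontr)
      assume "\<not> (z = bot L \<or> z = q)"
      then have "r (bot L) < r z" "r z < r q" using r_strict_mono[OF bot_in zC bz] r_strict_mono[OF zC qC zq] by auto
      then show False using rq r_bot by simp
    qed
  qed
  then show "q \<in> atoms L" unfolding atoms_def using qC by simp
qed (use atoms_in r_atom in auto)

lemma below_atom_cases: assumes q: "q \<in> atoms L" and zC: "z \<in> C" and zq: "z \<sqsubseteq> q"
  shows "z = bot L \<or> z = q"
  using q zC zq unfolding atoms_def covers_def using bot_le by blast

lemma modular_law:
  assumes FC: "F \<in> C" and F_modular: "\<And>G. G \<in> C \<Longrightarrow> r (F \<sqinter> G) + r (F \<squnion> G) = r F + r G"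
    and XC: "X \<in> C" and aC: "a \<in> C" and aF: "a \<sqsubseteq> F"
  shows "(X \<squnion> a) \<sqinter> F = (X \<sqinter> F) \<squnion> a"
proof -
  define m where "m = (X \<sqinter> F) \<squnion> a"
  define n where "n = (X \<squnion> a) \<sqinter> F"
  have XF: "X \<sqinter> F \<in> C" and Xa: "X \<squnion> a \<in> C" using XC FC aC by auto
  have mC: "m \<in> C" and nC: "n \<in> C" unfolding m_def n_def using XF Xa FC aC by auto
  have mn: "m \<sqsubseteq> n" unfolding m_def n_def using modular_ineq[OF XC FC aC aF] .
  have "X \<sqinter> F \<sqsubseteq> m \<sqinter> X"
    using meet_greatest[OF mC XC XF _ meet_lb1[OF XC FC]] join_ub1[OF XF aC] unfolding m_def by simp
  then have "r (X \<sqinter> F) \<le> r (m \<sqinter> X)" using r_mono XF mC XC by simp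
  moreover have "r (m \<sqinter> X) + r (X \<squnion> a) \<le> r m + r X"
    using r_semimodular[OF mC XC] join_absorb_below[OF XC XF aC meet_lb1[OF XC FC]] unfolding m_def by simp
  moreover have "r n + r (F \<squnion> X) = r F + r (X \<squnion> a)"
    using F_modular[OF Xa] join_absorb_below[OF FC aC XC aF] meet_comm[of F] join_comm[of F]
      join_comm[of X a] unfolding n_def by simp
  moreover have "r (X \<sqinter> F) + r (F \<squnion> X) = r F + r X" using F_modular[OF XC] meet_comm[of F] by simp
  ultimately have "r n \<le> r m" by linarith
  then have "m = n" using r_strict_mono[OF mC nC mn] by fastforce
  then show ?thesis unfolding m_def n_def by simp
qed

end

lemma geometric_rank_rk:
  assumes g: "geometric E"
  shows "geometric_rank E (rk E)"
proof -
  have lat: "is_lattice E" and rk: "ranked E" and at: "atomic E" and sm: "semimodular E"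
    using g unfolding geometric_def by auto
  interpret fin_lattice E by (rule fin_lattice.intro[OF lat])
  have cov: "\<And>x y. covers E x y \<Longrightarrow> rk E y = Suc (rk E x)" using rk_cover[OF rk] .
  show ?thesis
  proof (unfold_locales)
    show "rk E (bot E) = 0" using rk_bot[OF rk] .
    show "\<And>x y. x \<in> lcar E \<Longrightarrow> y \<in> lcar E \<Longrightarrow> lle E x y \<Longrightarrow> x \<noteq> y \<Longrightarrow> rk E x < rk E y"
      using strict_mono_of_cover[where r="rk E", OF cov] by blast
  next
    fix x q assume xC: "x \<in> lcar E" and q: "q \<in> atoms E"
    have qC: "q \<in> lcar E" and cq: "covers E (bot E) q" using q unfolding atoms_def by auto
    have "rk E q = 1" using cov[OF cq] rk_bot[OF rk] by simp
    moreover have "rk E (meet E x q) + rk E (join E x q) \<le> rk E x + rk E q"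
      using sm xC qC unfolding semimodular_def by blast
    ultimately show "rk E (join E x q) \<le> Suc (rk E x)" by simp
  next
    fix x y assume xC: "x \<in> lcar E" and yC: "y \<in> lcar E" and nxy: "\<not> lle E x y"
    obtain A where A: "A \<subseteq> atoms E" "x = Join E A" using at xC unfolding atomic_def by blast
    have AC: "A \<subseteq> lcar E" using A(1) unfolding atoms_def by auto
    show "\<exists>q\<in>atoms E. lle E q x \<and> \<not> lle E q y"
    proof (rule ccontr)
      assume "\<not> ?thesis"
      then have "\<And>a. a \<in> A \<Longrightarrow> lle E a y" using A(1) A(2) Join_ub[OF AC] by blast
      then have "lle E x y" using Join_least[OF AC yC] A(2) by blast
      then show False using nxy by simp
    qed
  qed
qed

locale geometric_order_iso =
  A: geometric_rank E "rk E" + B: geometric_rank E' "rk E'"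
  for E E' :: lat and \<phi> :: "nat \<Rightarrow> nat" +
  assumes bij: "bij_betw \<phi> (lcar E) (lcar E')"
    and le_iff: "x \<in> lcar E \<Longrightarrow> y \<in> lcar E \<Longrightarrow> lle E x y \<longleftrightarrow> lle E' (\<phi> x) (\<phi> y)"
begin

lemma phi_in: "x \<in> lcar E \<Longrightarrow> \<phi> x \<in> lcar E'"
  using bij bij_betwE by blast

lemma phi_surj: "w \<in> lcar E' \<Longrightarrow> \<exists>x\<in>lcar E. w = \<phi> x"
  using bij unfolding bij_betw_def by blast

lemma phi_bot: "\<phi> (bot E) = bot E'"
proof (rule sym, rule B.bot_eq)
  fix w assume "w \<in> lcar E'"
  then obtain x where "x \<in> lcar E" "w = \<phi> x" using phi_surj by blast
  then show "lle E' (\<phi> (bot E)) w" using le_iff A.bot_le by simp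
qed (use phi_in in simp)

lemma phi_top: "\<phi> (top E) = top E'"
proof (rule sym, rule B.top_eq)
  fix w assume "w \<in> lcar E'"
  then obtain x where "x \<in> lcar E" "w = \<phi> x" using phi_surj by blast
  then show "lle E' w (\<phi> (top E))" using le_iff A.le_top by simp
qed (use phi_in in simp)

lemma phi_covers: assumes cv: "covers E a b" shows "covers E' (\<phi> a) (\<phi> b)"
proof -
  have a: "a \<in> lcar E" "b \<in> lcar E" "lle E a b" "a \<noteq> b" using A.covers_in[OF cv] by auto
  show ?thesis
  proof (rule B.coversI)
    show "\<phi> a \<noteq> \<phi> b" using bij a unfolding bij_betw_def inj_on_def by blast
    fix z assume z: "z \<in> lcar E'" "lle E' (\<phi> a) z" "lle E' z (\<phi> b)"
    obtain w where w: "w \<in> lcar E" "z = \<phi> w" using phi_surj z(1) by blast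
    then have "w = a \<or> w = b" using A.coversD[OF cv w(1)] le_iff a z by auto
    then show "z = \<phi> a \<or> z = \<phi> b" using w by auto
  qed (use phi_in le_iff a in auto)
qed

lemma phi_join: assumes x: "x \<in> lcar E" and y: "y \<in> lcar E"
  shows "\<phi> (join E x y) = join E' (\<phi> x) (\<phi> y)"
proof (rule sym, rule B.join_eq)
  fix w assume w: "w \<in> lcar E'" "lle E' (\<phi> x) w" "lle E' (\<phi> y) w"
  obtain v where v: "v \<in> lcar E" "w = \<phi> v" using phi_surj w(1) by blast
  then have "lle E (join E x y) v" using A.join_least le_iff w x y by simp
  then show "lle E' (\<phi> (join E x y)) w" using le_iff x y v by simp
qed (use phi_in le_iff A.join_ub1 A.join_ub2 x y in auto)

lemma embedding: "embedding E E' \<phi>"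
  unfolding embedding_def
proof (intro conjI ballI impI)
  show "inj_on \<phi> (lcar E)" using bij by (rule bij_betw_imp_inj_on)
  show "\<phi> ` atoms E \<subseteq> atoms E'"
  proof
    fix q assume "q \<in> \<phi> ` atoms E"
    then obtain a where "a \<in> lcar E" "covers E (bot E) a" "q = \<phi> a" unfolding atoms_def by auto
    then show "q \<in> atoms E'" using phi_covers[of "bot E" a] phi_in phi_bot unfolding atoms_def by auto
  qed
qed (use phi_in phi_join le_iff in auto)

lemma rk_top: "rk E (top E) = rk E' (top E')"
proof -
  obtain xs where xs: "max_chain E xs (top E)" using A.max_chain_exists[OF A.top_in] by blast
  have "max_chain E' (map \<phi> xs) (top E')"
    using xs phi_covers phi_bot phi_top unfolding max_chain_def by (auto simp: hd_map last_map)
  then show ?thesis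
    using A.length_max_chain[where r="rk E", OF A.r_cover A.r_bot xs]
      B.length_max_chain[where r="rk E'", OF B.r_cover B.r_bot] by fastforce
qed

end

lemma geometric_order_isoI:
  assumes "geometric E" "geometric E'" "bij_betw \<phi> (lcar E) (lcar E')"
    and "\<And>x y. x \<in> lcar E \<Longrightarrow> y \<in> lcar E \<Longrightarrow> lle E x y \<longleftrightarrow> lle E' (\<phi> x) (\<phi> y)"
  shows "geometric_order_iso E E' \<phi>"
  using assms geometric_rank_rk by (simp add: geometric_order_iso_def geometric_order_iso_axioms_def)

section \<open>Modular extensions\<close>

locale mod_extension =
  fixes L E :: lat and \<iota> :: "nat \<Rightarrow> nat"
  assumes geom_L: "geometric L" and is_mod_ext: "mod_ext L E \<iota>"
begin

lemma geom_E: "geometric E" using is_mod_ext unfolding mod_ext_def by simp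

sublocale L: geometric_rank L "rk L" using geometric_rank_rk[OF geom_L] .
sublocale E: geometric_rank E "rk E" using geometric_rank_rk[OF geom_E] .

abbreviation "F\<iota> \<equiv> Fi L \<iota>"

lemma iota_embedding: "embedding L E \<iota>" using is_mod_ext unfolding mod_ext_def by simp

lemma iota_inj: "inj_on \<iota> (lcar L)" and iota_image_subset: "\<iota> ` lcar L \<subseteq> lcar E"
  and iota_mono: "x \<in> lcar L \<Longrightarrow> y \<in> lcar L \<Longrightarrow> lle L x y \<Longrightarrow> lle E (\<iota> x) (\<iota> y)"
  and iota_join: "x \<in> lcar L \<Longrightarrow> y \<in> lcar L \<Longrightarrow> \<iota> (join L x y) = join E (\<iota> x) (\<iota> y)"
  and iota_atoms: "\<iota> ` atoms L \<subseteq> atoms E"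
  using iota_embedding unfolding embedding_def by auto

lemma iota_in: "x \<in> lcar L \<Longrightarrow> \<iota> x \<in> lcar E" using iota_image_subset by blast

lemma iota_le_reflect: assumes "x \<in> lcar L" "y \<in> lcar L" "lle E (\<iota> x) (\<iota> y)" shows "lle L x y"
proof -
  have "join E (\<iota> x) (\<iota> y) = \<iota> y" using E.join_absorb[OF iota_in iota_in] assms by blast
  then have "\<iota> (join L x y) = \<iota> y" using iota_join assms by simp
  then have "join L x y = y" using iota_inj assms L.join_in unfolding inj_on_def by blast
  then show ?thesis using L.le_join_iff assms by blast
qed

lemma F_in: "F\<iota> \<in> lcar E" unfolding Fi_def using iota_in[OF L.top_in] .

lemma iota_image: "\<iota> ` lcar L = {x \<in> lcar E. lle E x F\<iota>}"
proof -
  obtain F where F: "modular_flat E F" "\<iota> ` lcar L = interval E (bot E) F"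
    using is_mod_ext unfolding mod_ext_def by blast
  have FC: "F \<in> lcar E" using F(1) unfolding modular_flat_def by simp
  have "F \<in> interval E (bot E) F" unfolding interval_def using FC E.bot_le[OF FC] by simp
  then obtain t where t: "t \<in> lcar L" "F = \<iota> t" using F(2) by auto
  have "F\<iota> \<in> interval E (bot E) F" using F(2) L.top_in unfolding Fi_def by blast
  then have "lle E F\<iota> F" unfolding interval_def by simp
  moreover have "lle E F F\<iota>" unfolding Fi_def using t iota_mono[OF t(1) L.top_in L.le_top[OF t(1)]] by simp
  ultimately have "F = F\<iota>" using E.antisym FC F_in by blast
  then have "\<iota> ` lcar L = interval E (bot E) F\<iota>" using F(2) by simp
  then show ?thesis unfolding interval_def using E.bot_le by auto
qed

lemma below_F_in_image: "x \<in> lcar E \<Longrightarrow> lle E x F\<iota> \<Longrightarrow> \<exists>t\<in>lcar L. x = \<iota> t"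
  using iota_image by auto

lemma iota_le_F: "x \<in> lcar L \<Longrightarrow> lle E (\<iota> x) F\<iota>"
  using iota_image by auto

lemma F_modular: "modular_flat E F\<iota>"
proof -
  obtain F where F: "modular_flat E F" "\<iota> ` lcar L = interval E (bot E) F"
    using is_mod_ext unfolding mod_ext_def by blast
  have FC: "F \<in> lcar E" using F(1) unfolding modular_flat_def by simp
  have "F \<in> interval E (bot E) F" unfolding interval_def using FC E.bot_le[OF FC] by simp
  then have "lle E F F\<iota>" using iota_image F(2) by auto
  moreover have "lle E F\<iota> F" using F(2) L.top_in unfolding Fi_def interval_def by blast
  ultimately have "F = F\<iota>" using E.antisym FC F_in by blast
  then show ?thesis using F(1) by simp
qed

lemma rk_F_modular: "G \<in> lcar E \<Longrightarrow> rk E (meet E F\<iota> G) + rk E (join E F\<iota> G) = rk E F\<iota> + rk E G"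
  using F_modular unfolding modular_flat_def by blast

lemma iota_bot: "\<iota> (bot L) = bot E"
proof -
  obtain t where t: "t \<in> lcar L" "bot E = \<iota> t" using below_F_in_image[OF E.bot_in E.bot_le[OF F_in]] by blast
  have "lle E (\<iota> (bot L)) (\<iota> t)" using iota_mono[OF L.bot_in t(1) L.bot_le[OF t(1)]] .
  then show ?thesis using t E.antisym[OF iota_in[OF L.bot_in] E.bot_in] E.bot_le[OF iota_in[OF L.bot_in]] by simp
qed

lemma iota_meet: assumes "x \<in> lcar L" "y \<in> lcar L" shows "\<iota> (meet L x y) = meet E (\<iota> x) (\<iota> y)"
proof (rule sym, rule E.meet_eq)
  show "\<iota> x \<in> lcar E" "\<iota> y \<in> lcar E" "\<iota> (meet L x y) \<in> lcar E" using assms iota_in by auto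
  show "lle E (\<iota> (meet L x y)) (\<iota> x)" using iota_mono L.meet_lb1 assms by auto
  show "lle E (\<iota> (meet L x y)) (\<iota> y)" using iota_mono L.meet_lb2 assms by auto
  fix w assume w: "w \<in> lcar E" "lle E w (\<iota> x)" "lle E w (\<iota> y)"
  have "lle E w F\<iota>" using E.trans[OF w(1) iota_in[OF assms(1)] F_in w(2) iota_le_F[OF assms(1)]] .
  then obtain z where z: "z \<in> lcar L" "w = \<iota> z" using below_F_in_image w(1) by blast
  have "lle L z x" "lle L z y" using iota_le_reflect z assms w by auto
  then have "lle L z (meet L x y)" using L.meet_greatest z assms by blast
  then show "lle E w (\<iota> (meet L x y))" using iota_mono z assms by simp
qed

lemma iota_covers: assumes "covers L a b" shows "covers E (\<iota> a) (\<iota> b)"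
proof -
  have a: "a \<in> lcar L" "b \<in> lcar L" "lle L a b" "a \<noteq> b" using L.covers_in[OF assms] by auto
  show ?thesis
  proof (rule E.coversI)
    show "\<iota> a \<in> lcar E" "\<iota> b \<in> lcar E" using a iota_in by auto
    show "lle E (\<iota> a) (\<iota> b)" using iota_mono a by simp
    show "\<iota> a \<noteq> \<iota> b" using iota_inj a unfolding inj_on_def by blast
    fix z assume z: "z \<in> lcar E" "lle E (\<iota> a) z" "lle E z (\<iota> b)"
    have "lle E z F\<iota>" using E.trans[OF z(1) iota_in[OF a(2)] F_in z(3) iota_le_F[OF a(2)]] .
    then obtain w where w: "w \<in> lcar L" "z = \<iota> w" using below_F_in_image z(1) by blast
    have "lle L a w" "lle L w b" using iota_le_reflect w a z by auto
    then have "w = a \<or> w = b" using L.coversD[OF assms w(1)] by blast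
    then show "z = \<iota> a \<or> z = \<iota> b" using w by auto
  qed
qed

lemma rk_iota: assumes xL: "x \<in> lcar L" shows "rk E (\<iota> x) = rk L x"
proof -
  obtain xs where xs: "max_chain L xs x" using L.max_chain_exists[OF xL] by blast
  have "max_chain E (map \<iota> xs) (\<iota> x)"
    using xs unfolding max_chain_def
    by (auto simp: hd_map last_map iota_bot iota_covers)
  then have "length (map \<iota> xs) = Suc (rk E (\<iota> x))"
    using E.length_max_chain[where r="rk E", OF E.r_cover E.r_bot] by blast
  moreover have "length xs = Suc (rk L x)"
    using L.length_max_chain[where r="rk L", OF L.r_cover L.r_bot xs] .
  ultimately show ?thesis by simp
qed

definition proj :: "nat \<Rightarrow> nat" where
  "proj X = the_inv_into (lcar L) \<iota> (meet E X F\<iota>)"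

lemma proj_props: assumes XC: "X \<in> lcar E"
  shows "proj X \<in> lcar L" "\<iota> (proj X) = meet E X F\<iota>"
proof -
  have mC: "meet E X F\<iota> \<in> lcar E" using XC F_in by simp
  have "lle E (meet E X F\<iota>) F\<iota>" using E.meet_lb2[OF XC F_in] .
  then have mi: "meet E X F\<iota> \<in> \<iota> ` lcar L" using iota_image mC by auto
  show "proj X \<in> lcar L" unfolding proj_def using the_inv_into_into[OF iota_inj mi] by simp
  show "\<iota> (proj X) = meet E X F\<iota>" unfolding proj_def using f_the_inv_into_f[OF iota_inj mi] .
qed

lemma proj_in: "X \<in> lcar E \<Longrightarrow> proj X \<in> lcar L" using proj_props by simp
lemma iota_proj: "X \<in> lcar E \<Longrightarrow> \<iota> (proj X) = meet E X F\<iota>" using proj_props by simp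

lemma proj_eqI: "X \<in> lcar E \<Longrightarrow> t \<in> lcar L \<Longrightarrow> \<iota> t = meet E X F\<iota> \<Longrightarrow> proj X = t"
  using proj_props iota_inj unfolding inj_on_def by metis

lemma proj_iota: assumes "x \<in> lcar L" shows "proj (\<iota> x) = x"
  using proj_eqI[OF iota_in[OF assms] assms] E.meet_absorb[OF iota_in[OF assms] F_in iota_le_F[OF assms]] by simp

lemma proj_mono: assumes "X \<in> lcar E" "Y \<in> lcar E" "lle E X Y" shows "lle L (proj X) (proj Y)"
proof -
  have "lle E (meet E X F\<iota>) (meet E Y F\<iota>)" using E.meet_mono[OF _ F_in _ F_in assms(3)] assms F_in by simp
  then have "lle E (\<iota> (proj X)) (\<iota> (proj Y))" using iota_proj assms by simp
  then show ?thesis using iota_le_reflect proj_in assms by blast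
qed

lemma rk_proj: "X \<in> lcar E \<Longrightarrow> rk L (proj X) = rk E (meet E X F\<iota>)"
  using rk_iota[OF proj_in] iota_proj by metis

lemma iota_proj_le: "X \<in> lcar E \<Longrightarrow> lle E (\<iota> (proj X)) X"
  using iota_proj E.meet_lb1 F_in by simp

lemma rk_proj_le: "X \<in> lcar E \<Longrightarrow> rk L (proj X) \<le> rk E X"
  using rk_iota[OF proj_in] E.r_mono[OF iota_in[OF proj_in] _ iota_proj_le] by metis

lemma modular_law_F: assumes "X \<in> lcar E" "a \<in> lcar E" "lle E a F\<iota>"
  shows "meet E (join E X a) F\<iota> = join E (meet E X F\<iota>) a"
  using E.modular_law[OF F_in rk_F_modular assms] .

lemma proj_join_iota: assumes XC: "X \<in> lcar E" and aL: "a \<in> lcar L"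
  shows "proj (join E X (\<iota> a)) = join L (proj X) a"
proof (rule proj_eqI)
  show "join E X (\<iota> a) \<in> lcar E" using XC iota_in[OF aL] by simp
  show "join L (proj X) a \<in> lcar L" using proj_in[OF XC] aL by simp
  have "meet E (join E X (\<iota> a)) F\<iota> = join E (meet E X F\<iota>) (\<iota> a)"
    using modular_law_F[OF XC iota_in[OF aL] iota_le_F[OF aL]] .
  also have "\<dots> = join E (\<iota> (proj X)) (\<iota> a)" using iota_proj[OF XC] by simp
  also have "\<dots> = \<iota> (join L (proj X) a)" using iota_join[OF proj_in[OF XC] aL] by simp
  finally show "\<iota> (join L (proj X) a) = meet E (join E X (\<iota> a)) F\<iota>" by simp
qed

lemma rk_join_F: assumes XC: "X \<in> lcar E"
  shows "rk E X + rk L (top L) = rk L (proj X) + rk E (join E X F\<iota>)"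
proof -
  have "rk E (meet E F\<iota> X) + rk E (join E F\<iota> X) = rk E F\<iota> + rk E X" using rk_F_modular[OF XC] .
  moreover have "rk E F\<iota> = rk L (top L)" unfolding Fi_def using rk_iota[OF L.top_in] .
  moreover have "meet E F\<iota> X = meet E X F\<iota>" using E.meet_comm by simp
  moreover have "join E F\<iota> X = join E X F\<iota>" using E.join_comm by simp
  ultimately show ?thesis using rk_proj[OF XC] by simp
qed

lemma proj_join_F: assumes "X \<in> lcar E" shows "proj (join E X F\<iota>) = top L"
  unfolding Fi_def using proj_join_iota[OF assms L.top_in]
    L.join_absorb[OF proj_in[OF assms] L.top_in L.le_top[OF proj_in[OF assms]]] by simp

lemma deg_eq_join_F:
  assumes "set J \<subseteq> lcar E"
  shows "deg L (E, \<iota>, J) = int (length J) - 2 * (int (rk E (join E (Join E (set J)) F\<iota>)) - int (rk L (top L)))"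
proof -
  have S: "Join E (set J) \<in> lcar E" using E.Join_in[OF assms] .
  have "rk E (Join E (set J)) + rk L (top L)
      = rk E (meet E (Join E (set J)) F\<iota>) + rk E (join E (Join E (set J)) F\<iota>)"
    using rk_join_F[OF S] rk_proj[OF S] by simp
  then show ?thesis by simp
qed

lemma proj_bot: "proj (bot E) = bot L"
  using proj_iota[OF L.bot_in] iota_bot by simp

lemma proj_F: "proj F\<iota> = top L"
  unfolding Fi_def using proj_iota[OF L.top_in] .

lemma atom_below_F: assumes H: "H \<in> atoms E" "lle E H F\<iota>"
  shows "proj H \<in> atoms L" "\<iota> (proj H) = H"
proof -
  have HC: "H \<in> lcar E" using E.atoms_in H(1) .
  obtain h where h: "h \<in> lcar L" "H = \<iota> h" using below_F_in_image[OF HC H(2)] by blast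
  have "proj H = h" using proj_iota h by simp
  moreover have "rk L h = 1" using rk_iota[OF h(1)] h(2) E.r_atom[OF H(1)] by simp
  ultimately show "proj H \<in> atoms L" using L.atoms_iff_r h(1) by simp
  show "\<iota> (proj H) = H" using proj_iota h by simp
qed

lemma proj_atom_not_below_F: assumes H: "H \<in> atoms E" "\<not> lle E H F\<iota>"
  shows "proj H = bot L"
proof -
  have HC: "H \<in> lcar E" using E.atoms_in H(1) .
  have mC: "meet E H F\<iota> \<in> lcar E" using HC F_in by simp
  have "meet E H F\<iota> = bot E \<or> meet E H F\<iota> = H" using E.below_atom_cases[OF H(1) mC E.meet_lb1[OF HC F_in]] .
  moreover have "meet E H F\<iota> \<noteq> H" using E.meet_lb2[OF HC F_in] H(2) by auto
  ultimately have "meet E H F\<iota> = bot E" by simp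
  then show ?thesis using proj_eqI[OF HC L.bot_in] iota_bot by simp
qed

lemma proj_meet: assumes XC: "X \<in> lcar E" and YC: "Y \<in> lcar E"
  shows "proj (meet E X Y) = meet L (proj X) (proj Y)"
proof (rule proj_eqI)
  show "meet E X Y \<in> lcar E" using XC YC by simp
  show "meet L (proj X) (proj Y) \<in> lcar L" using proj_in XC YC by simp
  have "\<iota> (meet L (proj X) (proj Y)) = meet E (\<iota> (proj X)) (\<iota> (proj Y))" using iota_meet proj_in XC YC by simp
  also have "\<dots> = meet E (meet E X F\<iota>) (meet E Y F\<iota>)" using iota_proj XC YC by simp
  also have "\<dots> = meet E (meet E X Y) F\<iota>" using E.meet_meet_right[OF XC YC F_in] .
  finally show "\<iota> (meet L (proj X) (proj Y)) = meet E (meet E X Y) F\<iota>" .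
qed

lemma in_iota_image_iff: "H \<in> lcar E \<Longrightarrow> H \<in> \<iota> ` lcar L \<longleftrightarrow> lle E H F\<iota>"
  using iota_image by auto

lemma the_inv_into_iota: "H \<in> lcar E \<Longrightarrow> lle E H F\<iota> \<Longrightarrow> the_inv_into (lcar L) \<iota> H = proj H"
  using below_F_in_image the_inv_into_f_f[OF iota_inj] proj_iota by metis

end

section \<open>The pushout of two modular extensions\<close>

abbreviation enc :: "nat \<times> nat \<Rightarrow> nat" where "enc \<equiv> prod_encode"
abbreviation dec :: "nat \<Rightarrow> nat \<times> nat" where "dec \<equiv> prod_decode"

locale pushout_pair =
  m1: mod_extension L E1 \<iota>1 + m2: mod_extension L E2 \<iota>2
  for L E1 E2 :: lat and \<iota>1 \<iota>2 :: "nat \<Rightarrow> nat"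
begin

abbreviation "F1 \<equiv> Fi L \<iota>1"
abbreviation "F2 \<equiv> Fi L \<iota>2"
abbreviation "P \<equiv> pushout L E1 \<iota>1 E2 \<iota>2"
abbreviation "\<iota>P \<equiv> pincl \<iota>1 \<iota>2"
abbreviation "FP \<equiv> enc (F1, F2)"

definition pairs :: "(nat \<times> nat) set" where
  "pairs = {(X1, X2). X1 \<in> lcar E1 \<and> X2 \<in> lcar E2 \<and> m1.proj X1 = m2.proj X2}"

definition pair_le :: "nat \<times> nat \<Rightarrow> nat \<times> nat \<Rightarrow> bool" where
  "pair_le a b \<longleftrightarrow> lle E1 (fst a) (fst b) \<and> lle E2 (snd a) (snd b)"

(* Componentwise joins need not be compatible; joining both components with the image of
   the join of their traces makes them compatible, and gives the least compatible upper bound. *)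
definition pair_join :: "nat \<times> nat \<Rightarrow> nat \<times> nat \<Rightarrow> nat \<times> nat" where
  "pair_join a b = (let c = join L (m1.proj (join E1 (fst a) (fst b))) (m2.proj (join E2 (snd a) (snd b)))
     in (join E1 (join E1 (fst a) (fst b)) (\<iota>1 c), join E2 (join E2 (snd a) (snd b)) (\<iota>2 c)))"

definition pair_meet :: "nat \<times> nat \<Rightarrow> nat \<times> nat \<Rightarrow> nat \<times> nat" where
  "pair_meet a b = (meet E1 (fst a) (fst b), meet E2 (snd a) (snd b))"

definition pair_rk :: "nat \<times> nat \<Rightarrow> nat" where
  "pair_rk a = rk E1 (fst a) + rk E2 (snd a) - rk L (m1.proj (fst a))"

definition plift1 :: "nat \<Rightarrow> nat \<times> nat" where
  "plift1 H = (if lle E1 H F1 then (H, \<iota>2 (m1.proj H)) else (H, bot E2))"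

definition plift2 :: "nat \<Rightarrow> nat \<times> nat" where
  "plift2 H = (if lle E2 H F2 then (\<iota>1 (m2.proj H), H) else (bot E1, H))"

lemma pairsI: "X1 \<in> lcar E1 \<Longrightarrow> X2 \<in> lcar E2 \<Longrightarrow> m1.proj X1 = m2.proj X2 \<Longrightarrow> (X1, X2) \<in> pairs"
  unfolding pairs_def by simp

lemma pairsD: "a \<in> pairs \<Longrightarrow> fst a \<in> lcar E1 \<and> snd a \<in> lcar E2 \<and> m1.proj (fst a) = m2.proj (snd a)"
  unfolding pairs_def by auto

lemma finite_pairs: "finite pairs"
proof -
  have "pairs \<subseteq> lcar E1 \<times> lcar E2" unfolding pairs_def by auto
  moreover have "finite (lcar E1 \<times> lcar E2)" using m1.E.finite_carrier m2.E.finite_carrier by simp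
  ultimately show ?thesis by (rule finite_subset)
qed

lemma bot_pair_in: "(bot E1, bot E2) \<in> pairs"
  using pairsI m1.proj_bot m2.proj_bot by simp

lemma pair_le_refl: "a \<in> pairs \<Longrightarrow> pair_le a a"
  unfolding pair_le_def using pairsD by simp

lemma pair_le_antisym: assumes "a \<in> pairs" "b \<in> pairs" "pair_le a b" "pair_le b a" shows "a = b"
proof -
  have A: "fst a \<in> lcar E1" "snd a \<in> lcar E2" "fst b \<in> lcar E1" "snd b \<in> lcar E2"
    using pairsD assms by auto
  have "fst a = fst b" using m1.E.antisym[OF A(1,3)] assms(3,4) unfolding pair_le_def by simp
  moreover have "snd a = snd b" using m2.E.antisym[OF A(2,4)] assms(3,4) unfolding pair_le_def by simp
  ultimately show ?thesis by (simp add: prod_eq_iff)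
qed

lemma pair_le_trans: assumes "a \<in> pairs" "b \<in> pairs" "c \<in> pairs" "pair_le a b" "pair_le b c" shows "pair_le a c"
proof -
  have A: "fst a \<in> lcar E1" "snd a \<in> lcar E2" "fst b \<in> lcar E1" "snd b \<in> lcar E2"
     "fst c \<in> lcar E1" "snd c \<in> lcar E2"
    using pairsD assms by auto
  show ?thesis unfolding pair_le_def using m1.E.trans[OF A(1,3,5)] m2.E.trans[OF A(2,4,6)] assms(4,5)
    unfolding pair_le_def by simp
qed

lemma iota_pair_in: "x \<in> lcar L \<Longrightarrow> (\<iota>1 x, \<iota>2 x) \<in> pairs"
  using pairsI m1.iota_in m2.iota_in m1.proj_iota m2.proj_iota by simp

lemma pair_meet_in: assumes "a \<in> pairs" "b \<in> pairs" shows "pair_meet a b \<in> pairs"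
  using pairsD[OF assms(1)] pairsD[OF assms(2)] m1.proj_meet m2.proj_meet unfolding pair_meet_def
  by (intro pairsI) auto

lemma pair_meet_glb: assumes a: "a \<in> pairs" and b: "b \<in> pairs"
  shows "pair_le (pair_meet a b) a" "pair_le (pair_meet a b) b" "\<And>z. z \<in> pairs \<Longrightarrow> pair_le z a \<Longrightarrow> pair_le z b \<Longrightarrow> pair_le z (pair_meet a b)"
  using pairsD[OF a] pairsD[OF b] unfolding pair_le_def pair_meet_def
  by (auto intro: m1.E.meet_lb1 m1.E.meet_lb2 m2.E.meet_lb1 m2.E.meet_lb2
     m1.E.meet_greatest m2.E.meet_greatest dest: pairsD)

lemma pair_join_eq:
  assumes a: "a \<in> pairs" and b: "b \<in> pairs"
  defines "U1 \<equiv> join E1 (fst a) (fst b)" and "U2 \<equiv> join E2 (snd a) (snd b)"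
  defines "c \<equiv> join L (m1.proj U1) (m2.proj U2)"
  shows "pair_join a b = (join E1 U1 (\<iota>1 c), join E2 U2 (\<iota>2 c))"
    and "c \<in> lcar L" "U1 \<in> lcar E1" "U2 \<in> lcar E2"
    and "m1.proj (join E1 U1 (\<iota>1 c)) = c" "m2.proj (join E2 U2 (\<iota>2 c)) = c"
proof -
  show "pair_join a b = (join E1 U1 (\<iota>1 c), join E2 U2 (\<iota>2 c))"
    unfolding pair_join_def U1_def U2_def c_def Let_def by simp
  show U1C: "U1 \<in> lcar E1" and U2C: "U2 \<in> lcar E2" unfolding U1_def U2_def using pairsD a b by auto
  have t1: "m1.proj U1 \<in> lcar L" and t2: "m2.proj U2 \<in> lcar L" using m1.proj_in[OF U1C] m2.proj_in[OF U2C] .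
  show cL: "c \<in> lcar L" unfolding c_def using t1 t2 by simp
  have "m1.proj (join E1 U1 (\<iota>1 c)) = join L (m1.proj U1) c" using m1.proj_join_iota[OF U1C cL] .
  also have "\<dots> = c" unfolding c_def using m1.L.join_absorb[OF t1 _ m1.L.join_ub1[OF t1 t2]] t1 t2 by simp
  finally show "m1.proj (join E1 U1 (\<iota>1 c)) = c" .
  have "m2.proj (join E2 U2 (\<iota>2 c)) = join L (m2.proj U2) c" using m2.proj_join_iota[OF U2C cL] .
  also have "\<dots> = c" unfolding c_def using m1.L.join_absorb[OF t2 _ m1.L.join_ub2[OF t1 t2]] t1 t2 by simp
  finally show "m2.proj (join E2 U2 (\<iota>2 c)) = c" .
qed

lemma pair_join_in: assumes "a \<in> pairs" "b \<in> pairs" shows "pair_join a b \<in> pairs"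
  using pair_join_eq[OF assms] by (auto intro!: pairsI m1.iota_in m2.iota_in)

lemma pair_join_ub: assumes a: "a \<in> pairs" and b: "b \<in> pairs" shows "pair_le a (pair_join a b)" "pair_le b (pair_join a b)"
proof -
  note f = pair_join_eq[OF a b]
  let ?U1 = "join E1 (fst a) (fst b)" and ?U2 = "join E2 (snd a) (snd b)"
  let ?c = "join L (m1.proj ?U1) (m2.proj ?U2)"
  have A: "fst a \<in> lcar E1" "snd a \<in> lcar E2" "fst b \<in> lcar E1" "snd b \<in> lcar E2" using pairsD a b by auto
  have i1: "\<iota>1 ?c \<in> lcar E1" and i2: "\<iota>2 ?c \<in> lcar E2" using f(2) m1.iota_in m2.iota_in by auto
  have W1: "lle E1 ?U1 (join E1 ?U1 (\<iota>1 ?c))" using m1.E.join_ub1[OF f(3) i1] .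
  have W2: "lle E2 ?U2 (join E2 ?U2 (\<iota>2 ?c))" using m2.E.join_ub1[OF f(4) i2] .
  have "lle E1 (fst a) ?U1" "lle E1 (fst b) ?U1" using m1.E.join_ub1 m1.E.join_ub2 A by auto
  moreover have "lle E2 (snd a) ?U2" "lle E2 (snd b) ?U2" using m2.E.join_ub1 m2.E.join_ub2 A by auto
  ultimately show "pair_le a (pair_join a b)" "pair_le b (pair_join a b)" unfolding pair_le_def f(1)
    using m1.E.trans[OF _ f(3) _ _ W1] m2.E.trans[OF _ f(4) _ _ W2] A f(3) f(4) i1 i2 by auto
qed

lemma pair_join_least: assumes a: "a \<in> pairs" and b: "b \<in> pairs" and z: "z \<in> pairs" and az: "pair_le a z" and bz: "pair_le b z"
  shows "pair_le (pair_join a b) z"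
proof -
  note f = pair_join_eq[OF a b]
  let ?U1 = "join E1 (fst a) (fst b)" and ?U2 = "join E2 (snd a) (snd b)"
  let ?c = "join L (m1.proj ?U1) (m2.proj ?U2)"
  have A: "fst a \<in> lcar E1" "snd a \<in> lcar E2" "fst b \<in> lcar E1" "snd b \<in> lcar E2"
    "fst z \<in> lcar E1" "snd z \<in> lcar E2" and tz: "m1.proj (fst z) = m2.proj (snd z)" using pairsD a b z by auto
  have U1z: "lle E1 ?U1 (fst z)" using m1.E.join_least A az bz unfolding pair_le_def by simp
  have U2z: "lle E2 ?U2 (snd z)" using m2.E.join_least A az bz unfolding pair_le_def by simp
  have c1: "lle L (m1.proj ?U1) (m1.proj (fst z))" using m1.proj_mono[OF f(3) A(5) U1z] .
  have c2: "lle L (m2.proj ?U2) (m1.proj (fst z))" using m2.proj_mono[OF f(4) A(6) U2z] tz by simp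
  have tzL: "m1.proj (fst z) \<in> lcar L" using m1.proj_in A by simp
  have cz: "lle L ?c (m1.proj (fst z))"
    using m1.L.join_least[OF m1.proj_in[OF f(3)] m2.proj_in[OF f(4)] tzL c1 c2] .
  have "lle E1 (\<iota>1 ?c) (\<iota>1 (m1.proj (fst z)))" using m1.iota_mono[OF f(2) tzL cz] .
  then have i1z: "lle E1 (\<iota>1 ?c) (fst z)"
    using m1.E.trans[OF m1.iota_in[OF f(2)] m1.iota_in[OF tzL] A(5) _ m1.iota_proj_le[OF A(5)]] by simp
  have "lle E2 (\<iota>2 ?c) (\<iota>2 (m2.proj (snd z)))" using m2.iota_mono[OF f(2) _ cz] tz tzL by simp
  then have i2z: "lle E2 (\<iota>2 ?c) (snd z)"
    using m2.E.trans[OF m2.iota_in[OF f(2)] m2.iota_in[OF m2.proj_in[OF A(6)]] A(6) _ m2.iota_proj_le[OF A(6)]] by simp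
  show ?thesis unfolding pair_le_def f(1)
    using m1.E.join_least[OF f(3) m1.iota_in[OF f(2)] A(5) U1z i1z]
      m2.E.join_least[OF f(4) m2.iota_in[OF f(2)] A(6) U2z i2z] by simp
qed

lemma pair_rk_via_F1: assumes a: "a \<in> pairs"
  shows "pair_rk a + rk L (top L) = rk E1 (join E1 (fst a) F1) + rk E2 (snd a)"
proof -
  have A: "fst a \<in> lcar E1" using pairsD a by simp
  have "rk E1 (fst a) + rk L (top L) = rk L (m1.proj (fst a)) + rk E1 (join E1 (fst a) F1)" using m1.rk_join_F[OF A] .
  moreover have "rk L (m1.proj (fst a)) \<le> rk E1 (fst a)" using m1.rk_proj_le[OF A] .
  ultimately show ?thesis unfolding pair_rk_def by simp
qed

lemma pair_rk_via_F2: assumes a: "a \<in> pairs"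
  shows "pair_rk a + rk L (top L) = rk E1 (fst a) + rk E2 (join E2 (snd a) F2)"
proof -
  have A: "snd a \<in> lcar E2" and t: "m1.proj (fst a) = m2.proj (snd a)" using pairsD a by auto
  have "rk E2 (snd a) + rk L (top L) = rk L (m2.proj (snd a)) + rk E2 (join E2 (snd a) F2)" using m2.rk_join_F[OF A] .
  moreover have "rk L (m2.proj (snd a)) \<le> rk E2 (snd a)" using m2.rk_proj_le[OF A] .
  ultimately show ?thesis unfolding pair_rk_def using t by simp
qed

lemma pair_rk_strict_mono: assumes a: "a \<in> pairs" and b: "b \<in> pairs" and ab: "pair_le a b" "a \<noteq> b"
  shows "pair_rk a < pair_rk b"
proof -
  have A: "fst a \<in> lcar E1" "snd a \<in> lcar E2" "fst b \<in> lcar E1" "snd b \<in> lcar E2" using pairsD a b by auto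
  have le1: "lle E1 (fst a) (fst b)" and le2: "lle E2 (snd a) (snd b)" using ab unfolding pair_le_def by auto
  have j1: "lle E1 (join E1 (fst a) F1) (join E1 (fst b) F1)"
    using m1.E.join_mono[OF A(1) m1.F_in A(3) m1.F_in le1 m1.E.refl[OF m1.F_in]] .
  have j2: "lle E2 (join E2 (snd a) F2) (join E2 (snd b) F2)"
    using m2.E.join_mono[OF A(2) m2.F_in A(4) m2.F_in le2 m2.E.refl[OF m2.F_in]] .
  have r1: "rk E1 (join E1 (fst a) F1) \<le> rk E1 (join E1 (fst b) F1)"
    using m1.E.r_mono[OF _ _ j1] A m1.F_in by simp
  have r2: "rk E2 (join E2 (snd a) F2) \<le> rk E2 (join E2 (snd b) F2)"
    using m2.E.r_mono[OF _ _ j2] A m2.F_in by simp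
  show ?thesis
  proof (cases "snd a = snd b")
    case False
    then have "rk E2 (snd a) < rk E2 (snd b)" using m2.E.r_strict_mono[OF A(2,4) le2] by simp
    then show ?thesis using pair_rk_via_F1[OF a] pair_rk_via_F1[OF b] r1 by simp
  next
    case True
    then have "fst a \<noteq> fst b" using ab(2) by (simp add: prod_eq_iff)
    then have "rk E1 (fst a) < rk E1 (fst b)" using m1.E.r_strict_mono[OF A(1,3) le1] by simp
    then show ?thesis using pair_rk_via_F2[OF a] pair_rk_via_F2[OF b] r2 by simp
  qed
qed

lemma pair_rk_bot: "pair_rk (bot E1, bot E2) = 0"
  unfolding pair_rk_def using m1.E.r_bot m2.E.r_bot m1.proj_bot by simp

lemma plift2_in: assumes H: "H \<in> atoms E2" shows "plift2 H \<in> pairs"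
proof (cases "lle E2 H F2")
  case True
  then show ?thesis unfolding plift2_def
    using m2.atom_below_F[OF H True] m1.proj_iota m1.iota_in m1.L.atoms_in m2.E.atoms_in[OF H] by (simp add: pairsI)
next
  case False
  then show ?thesis unfolding plift2_def
    using m2.proj_atom_not_below_F[OF H False] m1.proj_bot m2.E.atoms_in[OF H] by (simp add: pairsI)
qed

lemma pair_rk_plift2: assumes H: "H \<in> atoms E2" shows "pair_rk (plift2 H) = 1"
proof (cases "lle E2 H F2")
  case True
  have h: "m2.proj H \<in> atoms L" "\<iota>2 (m2.proj H) = H" using m2.atom_below_F[OF H True] by auto
  have hL: "m2.proj H \<in> lcar L" using m1.L.atoms_in[OF h(1)] .
  have "rk E1 (\<iota>1 (m2.proj H)) = 1" using m1.rk_iota[OF hL] m1.L.r_atom[OF h(1)] by simp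
  moreover have "rk E2 H = 1" using m2.E.r_atom[OF H] .
  moreover have "m1.proj (\<iota>1 (m2.proj H)) = m2.proj H" using m1.proj_iota[OF hL] .
  ultimately show ?thesis unfolding pair_rk_def plift2_def using True m1.L.r_atom[OF h(1)] by simp
next
  case False
  then show ?thesis unfolding pair_rk_def plift2_def using m2.E.r_atom[OF H] m1.E.r_bot m1.proj_bot m1.L.r_bot by simp
qed

lemma plift2_le: assumes a: "a \<in> pairs" and H: "H \<in> atoms E2" and Ha: "lle E2 H (snd a)"
  shows "pair_le (plift2 H) a"
proof -
  have A: "fst a \<in> lcar E1" "snd a \<in> lcar E2" and t: "m1.proj (fst a) = m2.proj (snd a)" using pairsD a by auto
  have HC: "H \<in> lcar E2" using m2.E.atoms_in[OF H] .
  show ?thesis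
  proof (cases "lle E2 H F2")
    case True
    have hL: "m2.proj H \<in> lcar L" using m2.proj_in[OF HC] .
    have "lle L (m2.proj H) (m2.proj (snd a))" using m2.proj_mono[OF HC A(2) Ha] .
    then have "lle E1 (\<iota>1 (m2.proj H)) (\<iota>1 (m1.proj (fst a)))" using m1.iota_mono[OF hL m1.proj_in[OF A(1)]] t by simp
    then have "lle E1 (\<iota>1 (m2.proj H)) (fst a)"
      using m1.E.trans[OF m1.iota_in[OF hL] m1.iota_in[OF m1.proj_in[OF A(1)]] A(1) _ m1.iota_proj_le[OF A(1)]] by simp
    then show ?thesis unfolding pair_le_def plift2_def using True Ha by simp
  next
    case False
    then show ?thesis unfolding pair_le_def plift2_def using Ha m1.E.bot_le[OF A(1)] by simp
  qed
qed

lemma separate_by_plift2: assumes a: "a \<in> pairs" and b: "b \<in> pairs" and n: "\<not> lle E2 (snd a) (snd b)"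
  shows "\<exists>H\<in>atoms E2. pair_le (plift2 H) a \<and> \<not> pair_le (plift2 H) b"
proof -
  have A: "snd a \<in> lcar E2" "snd b \<in> lcar E2" using pairsD a b by auto
  obtain H where H: "H \<in> atoms E2" "lle E2 H (snd a)" "\<not> lle E2 H (snd b)" using m2.E.atoms_separate[OF A n] by blast
  have "snd (plift2 H) = H" unfolding plift2_def by simp
  then have "\<not> pair_le (plift2 H) b" using H(3) unfolding pair_le_def by simp
  then show ?thesis using plift2_le[OF a H(1,2)] H(1) by blast
qed

lemma pair_join_below_F1:
  assumes a: "a \<in> pairs" and x: "x \<in> pairs" and xF: "lle E1 (fst x) F1"
  shows "join E1 (fst (pair_join a x)) F1 = join E1 (fst a) F1"
    and "snd (pair_join a x) = join E2 (snd a) (snd x)"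
proof -
  define U1 where "U1 = join E1 (fst a) (fst x)"
  define U2 where "U2 = join E2 (snd a) (snd x)"
  define c where "c = join L (m1.proj U1) (m2.proj U2)"
  note f = pair_join_eq[OF a x, folded U1_def U2_def, folded c_def]
  have A: "fst a \<in> lcar E1" "snd a \<in> lcar E2" "fst x \<in> lcar E1" "snd x \<in> lcar E2"
    and ta: "m1.proj (fst a) = m2.proj (snd a)" and tx: "m1.proj (fst x) = m2.proj (snd x)"
    using pairsD a x by auto
  define s where "s = m1.proj (fst x)"
  have sL: "s \<in> lcar L" unfolding s_def using m1.proj_in[OF A(3)] .
  have xs: "fst x = \<iota>1 s"
    unfolding s_def using m1.iota_proj[OF A(3)] m1.E.meet_absorb[OF A(3) m1.F_in xF] by simp
  have "m1.proj U1 = join L (m2.proj (snd a)) (m2.proj (snd x))"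
    unfolding U1_def xs using m1.proj_join_iota[OF A(1) sL] m1.proj_iota[OF sL] ta tx xs by simp
  also have "lle L \<dots> (m2.proj U2)"
  proof (rule m1.L.join_least)
    show "lle L (m2.proj (snd a)) (m2.proj U2)" "lle L (m2.proj (snd x)) (m2.proj U2)"
      unfolding U2_def using m2.proj_mono[OF _ f(4)] A(2,4) m2.E.join_ub1 m2.E.join_ub2
      by (simp_all add: U2_def)
  qed (use m2.proj_in A f(4) in auto)
  finally have "c = m2.proj U2"
    unfolding c_def using m1.L.join_absorb m1.proj_in m2.proj_in f(3,4) by simp
  then have "lle E2 (\<iota>2 c) U2" using m2.iota_proj_le[OF f(4)] by simp
  then show "snd (pair_join a x) = U2"
    using f(1) m2.E.join_absorb2[OF f(4) m2.iota_in[OF f(2)]] by simp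
  have "join E1 (join E1 U1 (\<iota>1 c)) F1 = join E1 U1 F1"
    using m1.E.join_join_absorb[OF f(3) m1.iota_in[OF f(2)] m1.F_in m1.iota_le_F[OF f(2)]] .
  also have "\<dots> = join E1 (fst a) F1"
    unfolding U1_def using m1.E.join_join_absorb[OF A(1,3) m1.F_in xF] .
  finally show "join E1 (fst (pair_join a x)) F1 = join E1 (fst a) F1" using f(1) by simp
qed

lemma fst_plift1 [simp]: "fst (plift1 H) = H"
  unfolding plift1_def by simp

lemma snd_plift2 [simp]: "snd (plift2 H) = H"
  unfolding plift2_def by simp

lemma snd_plift1_in: "H \<in> lcar E1 \<Longrightarrow> snd (plift1 H) \<in> lcar E2"
  unfolding plift1_def using m1.proj_in m2.iota_in by simp

lemma fst_plift2_in: "H \<in> lcar E2 \<Longrightarrow> fst (plift2 H) \<in> lcar E1"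
  unfolding plift2_def using m2.proj_in m1.iota_in by simp

lemma plift1_below_F2: "H \<in> lcar E1 \<Longrightarrow> lle E2 (snd (plift1 H)) F2"
  unfolding plift1_def using m1.proj_in m2.iota_le_F m2.E.bot_le[OF m2.F_in] by simp

lemma plift2_below_F1: "H \<in> lcar E2 \<Longrightarrow> lle E1 (fst (plift2 H)) F1"
  unfolding plift2_def using m2.proj_in m1.iota_le_F m1.E.bot_le[OF m1.F_in] by simp

lemma pair_rk_join_plift2: assumes a: "a \<in> pairs" and H: "H \<in> atoms E2"
  shows "pair_rk (pair_join a (plift2 H)) \<le> Suc (pair_rk a)"
proof -
  have x: "plift2 H \<in> pairs" using plift2_in[OF H] .
  have A: "snd a \<in> lcar E2" using pairsD a by auto
  have "pair_rk (pair_join a (plift2 H)) + rk L (top L)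
      = rk E1 (join E1 (fst a) F1) + rk E2 (join E2 (snd a) H)"
    using pair_rk_via_F1[OF pair_join_in[OF a x]] pair_join_below_F1[OF a x plift2_below_F1[OF m2.E.atoms_in[OF H]]]
    by simp
  moreover have "rk E2 (join E2 (snd a) H) \<le> Suc (rk E2 (snd a))" using m2.E.r_join_atom[OF A H] .
  ultimately show ?thesis using pair_rk_via_F1[OF a] by simp
qed

lemma pushout_pair_swap: "pushout_pair L E2 E1 \<iota>2 \<iota>1"
  by (intro pushout_pair.intro) (rule m2.mod_extension_axioms, rule m1.mod_extension_axioms)

lemma swap_pushout:
  shows "pushout_pair.pairs L E2 E1 \<iota>2 \<iota>1 = prod.swap ` pairs"
    and "\<And>H. pushout_pair.plift2 L E2 E1 \<iota>2 \<iota>1 H = prod.swap (plift1 H)"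
    and "\<And>a b. pushout_pair.pair_le E2 E1 (prod.swap a) (prod.swap b) = pair_le a b"
    and "\<And>a b. pushout_pair.pair_join L E2 E1 \<iota>2 \<iota>1 (prod.swap a) (prod.swap b) = prod.swap (pair_join a b)"
    and "\<And>a. a \<in> pairs \<Longrightarrow> pushout_pair.pair_rk L E2 E1 \<iota>2 (prod.swap a) = pair_rk a"
proof -
  interpret sw: pushout_pair L E2 E1 \<iota>2 \<iota>1 by (rule pushout_pair_swap)
  show "sw.pairs = prod.swap ` pairs" unfolding sw.pairs_def pairs_def by force
  show "\<And>H. sw.plift2 H = prod.swap (plift1 H)" unfolding sw.plift2_def plift1_def by simp
  show "\<And>a b. sw.pair_le (prod.swap a) (prod.swap b) = pair_le a b" unfolding sw.pair_le_def pair_le_def by auto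
  show "\<And>a b. sw.pair_join (prod.swap a) (prod.swap b) = prod.swap (pair_join a b)"
    unfolding sw.pair_join_def pair_join_def Let_def by (simp add: m1.L.join_comm)
  show "\<And>a. a \<in> pairs \<Longrightarrow> sw.pair_rk (prod.swap a) = pair_rk a"
    unfolding sw.pair_rk_def pair_rk_def using pairsD by auto
qed

lemma swap_in_pairs: "a \<in> pairs \<Longrightarrow> prod.swap a \<in> pushout_pair.pairs L E2 E1 \<iota>2 \<iota>1"
  using swap_pushout(1) by simp

lemma plift1_in: assumes H: "H \<in> atoms E1" shows "plift1 H \<in> pairs"
proof -
  interpret sw: pushout_pair L E2 E1 \<iota>2 \<iota>1 by (rule pushout_pair_swap)
  have "sw.plift2 H \<in> sw.pairs" using sw.plift2_in[OF H] .
  then have "prod.swap (plift1 H) \<in> prod.swap ` pairs" using swap_pushout(1,2) by simp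
  then obtain a where "a \<in> pairs" "prod.swap (plift1 H) = prod.swap a" by blast
  then show ?thesis by (metis swap_swap)
qed

lemma pair_rk_plift1: assumes H: "H \<in> atoms E1" shows "pair_rk (plift1 H) = 1"
proof -
  interpret sw: pushout_pair L E2 E1 \<iota>2 \<iota>1 by (rule pushout_pair_swap)
  have "sw.pair_rk (sw.plift2 H) = 1" using sw.pair_rk_plift2[OF H] .
  then show ?thesis using swap_pushout(2,5) plift1_in[OF H] by simp
qed

lemma separate_by_plift1: assumes a: "a \<in> pairs" and b: "b \<in> pairs" and n: "\<not> lle E1 (fst a) (fst b)"
  shows "\<exists>H\<in>atoms E1. pair_le (plift1 H) a \<and> \<not> pair_le (plift1 H) b"
proof -
  interpret sw: pushout_pair L E2 E1 \<iota>2 \<iota>1 by (rule pushout_pair_swap)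
  obtain H where "H \<in> atoms E1" "sw.pair_le (sw.plift2 H) (prod.swap a)" "\<not> sw.pair_le (sw.plift2 H) (prod.swap b)"
    using sw.separate_by_plift2[OF swap_in_pairs[OF a] swap_in_pairs[OF b]] n by auto
  then show ?thesis using swap_pushout(2,3) by auto
qed

lemma pair_rk_join_plift1: assumes a: "a \<in> pairs" and H: "H \<in> atoms E1"
  shows "pair_rk (pair_join a (plift1 H)) \<le> Suc (pair_rk a)"
proof -
  interpret sw: pushout_pair L E2 E1 \<iota>2 \<iota>1 by (rule pushout_pair_swap)
  have "sw.pair_rk (sw.pair_join (prod.swap a) (sw.plift2 H)) \<le> Suc (sw.pair_rk (prod.swap a))"
    using sw.pair_rk_join_plift2[OF swap_in_pairs[OF a] H] .
  then show ?thesis using swap_pushout(2,4,5) a pair_join_in[OF a plift1_in[OF H]] by simp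
qed

lemma carrier_P: "lcar P = enc ` pairs"
  unfolding pushout_def pairs_def m1.proj_def m2.proj_def by auto

lemma le_P: "lle P x y \<longleftrightarrow> pair_le (dec x) (dec y)"
  unfolding pushout_def pair_le_def by simp

lemma mem_P: "x \<in> lcar P \<longleftrightarrow> dec x \<in> pairs"
  unfolding carrier_P by (metis prod_encode_inverse prod_decode_inverse image_iff)

lemma enc_mem_P: "enc a \<in> lcar P \<longleftrightarrow> a \<in> pairs"
  using mem_P by simp

lemma lub_P: assumes x: "x \<in> lcar P" and y: "y \<in> lcar P" shows "is_lub P {x, y} (enc (pair_join (dec x) (dec y)))"
proof -
  have xP: "dec x \<in> pairs" and yP: "dec y \<in> pairs" using x y mem_P by auto
  have jP: "pair_join (dec x) (dec y) \<in> pairs" using pair_join_in[OF xP yP] .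
  show ?thesis
    unfolding is_lub_def
  proof (intro conjI ballI impI)
    show "enc (pair_join (dec x) (dec y)) \<in> lcar P" using enc_mem_P jP by simp
    fix a assume "a \<in> {x, y}"
    then show "lle P a (enc (pair_join (dec x) (dec y)))" unfolding le_P using pair_join_ub[OF xP yP] by auto
  next
    fix w assume w: "w \<in> lcar P" and ub: "\<forall>a\<in>{x, y}. lle P a w"
    have wP: "dec w \<in> pairs" using w mem_P by simp
    show "lle P (enc (pair_join (dec x) (dec y))) w" unfolding le_P using pair_join_least[OF xP yP wP] ub unfolding le_P by simp
  qed
qed

lemma glb_P: assumes x: "x \<in> lcar P" and y: "y \<in> lcar P" shows "is_glb P {x, y} (enc (pair_meet (dec x) (dec y)))"
proof -
  have xP: "dec x \<in> pairs" and yP: "dec y \<in> pairs" using x y mem_P by auto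
  have mP: "pair_meet (dec x) (dec y) \<in> pairs" using pair_meet_in[OF xP yP] .
  show ?thesis
    unfolding is_glb_def
  proof (intro conjI ballI impI)
    show "enc (pair_meet (dec x) (dec y)) \<in> lcar P" using enc_mem_P mP by simp
    fix a assume "a \<in> {x, y}"
    then show "lle P (enc (pair_meet (dec x) (dec y))) a" unfolding le_P using pair_meet_glb[OF xP yP] by auto
  next
    fix w assume w: "w \<in> lcar P" and lb: "\<forall>a\<in>{x, y}. lle P w a"
    have wP: "dec w \<in> pairs" using w mem_P by simp
    show "lle P w (enc (pair_meet (dec x) (dec y)))" unfolding le_P using pair_meet_glb(3)[OF xP yP wP] lb unfolding le_P by simp
  qed
qed

lemma lattice_P: "is_lattice P"
proof -
  have f: "finite (lcar P)" unfolding carrier_P using finite_pairs by simp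
  have ne: "lcar P \<noteq> {}" unfolding carrier_P using bot_pair_in by blast
  have r: "\<forall>x\<in>lcar P. lle P x x" unfolding le_P using pair_le_refl mem_P by simp
  have a: "\<forall>x\<in>lcar P. \<forall>y\<in>lcar P. lle P x y \<and> lle P y x \<longrightarrow> x = y"
  proof (intro ballI impI)
    fix x y assume xy: "x \<in> lcar P" "y \<in> lcar P" "lle P x y \<and> lle P y x"
    have "dec x \<in> pairs" "dec y \<in> pairs" using xy mem_P by auto
    then have "dec x = dec y" using pair_le_antisym xy unfolding le_P by blast
    then show "x = y" by (metis prod_decode_inverse)
  qed
  have t: "\<forall>x\<in>lcar P. \<forall>y\<in>lcar P. \<forall>z\<in>lcar P. lle P x y \<and> lle P y z \<longrightarrow> lle P x z"
    unfolding le_P using pair_le_trans mem_P by blast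
  have l: "\<forall>x\<in>lcar P. \<forall>y\<in>lcar P. (\<exists>z. is_lub P {x, y} z) \<and> (\<exists>z. is_glb P {x, y} z)"
    using lub_P glb_P by blast
  show ?thesis unfolding is_lattice_def using f ne r a t l by blast
qed

sublocale P: fin_lattice P by (rule fin_lattice.intro[OF lattice_P])

lemma join_P: assumes "a \<in> pairs" "b \<in> pairs" shows "join P (enc a) (enc b) = enc (pair_join a b)"
proof (rule P.join_eq)
  show "enc a \<in> lcar P" "enc b \<in> lcar P" "enc (pair_join a b) \<in> lcar P" using assms pair_join_in enc_mem_P by auto
  show "lle P (enc a) (enc (pair_join a b))" "lle P (enc b) (enc (pair_join a b))" unfolding le_P using pair_join_ub[OF assms] by auto
  fix w assume "w \<in> lcar P" "lle P (enc a) w" "lle P (enc b) w"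
  then show "lle P (enc (pair_join a b)) w" unfolding le_P using pair_join_least[OF assms] mem_P by simp
qed

lemma meet_P: assumes "a \<in> pairs" "b \<in> pairs" shows "meet P (enc a) (enc b) = enc (pair_meet a b)"
proof (rule P.meet_eq)
  show "enc a \<in> lcar P" "enc b \<in> lcar P" "enc (pair_meet a b) \<in> lcar P" using assms pair_meet_in enc_mem_P by auto
  show "lle P (enc (pair_meet a b)) (enc a)" "lle P (enc (pair_meet a b)) (enc b)" unfolding le_P using pair_meet_glb[OF assms] by auto
  fix w assume "w \<in> lcar P" "lle P w (enc a)" "lle P w (enc b)"
  then show "lle P w (enc (pair_meet a b))" unfolding le_P using pair_meet_glb(3)[OF assms] mem_P by simp
qed

lemma bot_P: "bot P = enc (bot E1, bot E2)"
proof (rule P.bot_eq)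
  show "enc (bot E1, bot E2) \<in> lcar P" using enc_mem_P bot_pair_in by simp
  fix x assume "x \<in> lcar P"
  then have "dec x \<in> pairs" using mem_P by simp
  then show "lle P (enc (bot E1, bot E2)) x" unfolding le_P pair_le_def
    using pairsD m1.E.bot_le m2.E.bot_le by simp
qed

lemma enc_atom_P: assumes lP: "l \<in> pairs" and rl: "pair_rk l = 1" shows "enc l \<in> atoms P"
proof -
  have bP: "bot P \<in> lcar P" by simp
  have lC: "enc l \<in> lcar P" using enc_mem_P lP by simp
  have ne: "bot P \<noteq> enc l" using rl pair_rk_bot bot_P by auto
  have "covers P (bot P) (enc l)"
  proof (rule P.coversI[OF bP lC P.bot_le[OF lC] ne])
    fix z assume zC: "z \<in> lcar P" and bz: "lle P (bot P) z" and zl: "lle P z (enc l)"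
    have zP: "dec z \<in> pairs" using zC mem_P by simp
    show "z = bot P \<or> z = enc l"
    proof (rule ccontr)
      assume "\<not> (z = bot P \<or> z = enc l)"
      then have n1: "(bot E1, bot E2) \<noteq> dec z" and n2: "dec z \<noteq> l" using bot_P by (metis prod_decode_inverse prod_encode_inverse)+
      have "pair_rk (bot E1, bot E2) < pair_rk (dec z)" using pair_rk_strict_mono[OF bot_pair_in zP _ n1] bz bot_P unfolding le_P by simp
      moreover have "pair_rk (dec z) < pair_rk l" using pair_rk_strict_mono[OF zP lP _ n2] zl unfolding le_P by simp
      ultimately show False using rl pair_rk_bot by simp
    qed
  qed
  then show ?thesis unfolding atoms_def using lC by simp
qed

lemma plift1_atom: "H \<in> atoms E1 \<Longrightarrow> enc (plift1 H) \<in> atoms P"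
  using enc_atom_P plift1_in pair_rk_plift1 by simp
lemma plift2_atom: "H \<in> atoms E2 \<Longrightarrow> enc (plift2 H) \<in> atoms P"
  using enc_atom_P plift2_in pair_rk_plift2 by simp

lemma atoms_P_cases: assumes q: "q \<in> atoms P"
  shows "(\<exists>H\<in>atoms E1. dec q = plift1 H) \<or> (\<exists>H\<in>atoms E2. dec q = plift2 H)"
proof -
  have qC: "q \<in> lcar P" and cv: "covers P (bot P) q" using q unfolding atoms_def by auto
  have qP: "dec q \<in> pairs" using qC mem_P by simp
  have "q \<noteq> bot P" using P.covers_in[OF cv] by simp
  then have "dec q \<noteq> (bot E1, bot E2)" using bot_P by (metis prod_decode_inverse)
  then have npl: "\<not> pair_le (dec q) (bot E1, bot E2)" using pair_le_antisym[OF qP bot_pair_in] pairsD[OF qP]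
    m1.E.bot_le m2.E.bot_le unfolding pair_le_def by auto
  have key: "\<And>l. l \<in> pairs \<Longrightarrow> pair_le l (dec q) \<Longrightarrow> \<not> pair_le l (bot E1, bot E2) \<Longrightarrow> dec q = l"
  proof -
    fix l assume lP: "l \<in> pairs" and lq: "pair_le l (dec q)" and lb: "\<not> pair_le l (bot E1, bot E2)"
    have lC: "enc l \<in> lcar P" using enc_mem_P lP by simp
    have "enc l = bot P \<or> enc l = q"
      using P.coversD[OF cv lC P.bot_le[OF lC]] lq unfolding le_P by simp
    moreover have "enc l \<noteq> bot P" using lb bot_P pair_le_refl[OF bot_pair_in] by auto
    ultimately show "dec q = l" by auto
  qed
  show ?thesis
  proof (cases "lle E1 (fst (dec q)) (bot E1)")
    case False
    then obtain H where "H \<in> atoms E1" "pair_le (plift1 H) (dec q)" "\<not> pair_le (plift1 H) (bot E1, bot E2)"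
      using separate_by_plift1[OF qP bot_pair_in] by auto
    then show ?thesis using key plift1_in by blast
  next
    case True
    then have "\<not> lle E2 (snd (dec q)) (bot E2)" using npl unfolding pair_le_def by simp
    then obtain H where "H \<in> atoms E2" "pair_le (plift2 H) (dec q)" "\<not> pair_le (plift2 H) (bot E1, bot E2)"
      using separate_by_plift2[OF qP bot_pair_in] by auto
    then show ?thesis using key plift2_in by blast
  qed
qed

lemma geometric_rank_P: "geometric_rank P (\<lambda>z. pair_rk (dec z))"
proof (unfold_locales)
  show "pair_rk (dec (bot P)) = 0" using bot_P pair_rk_bot by simp
  fix x y assume "x \<in> lcar P" "y \<in> lcar P" "lle P x y" "x \<noteq> y"
  then show "pair_rk (dec x) < pair_rk (dec y)" using pair_rk_strict_mono mem_P unfolding le_P by (metis prod_decode_inverse)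
next
  fix x q assume x: "x \<in> lcar P" and q: "q \<in> atoms P"
  have xP: "dec x \<in> pairs" using x mem_P by simp
  have qP: "dec q \<in> pairs" using q mem_P unfolding atoms_def by simp
  have j: "join P x q = enc (pair_join (dec x) (dec q))" using join_P[OF xP qP] by simp
  show "pair_rk (dec (join P x q)) \<le> Suc (pair_rk (dec x))"
    using atoms_P_cases[OF q] pair_rk_join_plift1[OF xP] pair_rk_join_plift2[OF xP] j by auto
next
  fix x y assume x: "x \<in> lcar P" and y: "y \<in> lcar P" and n: "\<not> lle P x y"
  have xP: "dec x \<in> pairs" and yP: "dec y \<in> pairs" using x y mem_P by auto
  show "\<exists>q\<in>atoms P. lle P q x \<and> \<not> lle P q y"
  proof (cases "lle E1 (fst (dec x)) (fst (dec y))")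
    case False
    then obtain H where "H \<in> atoms E1" "pair_le (plift1 H) (dec x)" "\<not> pair_le (plift1 H) (dec y)" using separate_by_plift1[OF xP yP] by auto
    then show ?thesis using plift1_atom unfolding le_P by (metis prod_encode_inverse)
  next
    case True
    then have "\<not> lle E2 (snd (dec x)) (snd (dec y))" using n unfolding le_P pair_le_def by simp
    then obtain H where "H \<in> atoms E2" "pair_le (plift2 H) (dec x)" "\<not> pair_le (plift2 H) (dec y)" using separate_by_plift2[OF xP yP] by auto
    then show ?thesis using plift2_atom unfolding le_P by (metis prod_encode_inverse)
  qed
qed

lemma geometric_P: "geometric P"
  by (rule geometric_rank.geometric_L[OF geometric_rank_P])

lemma rk_P: "x \<in> lcar P \<Longrightarrow> rk P x = pair_rk (dec x)"
  using geometric_rank.rk_eq_r[OF geometric_rank_P] by simp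

lemma iotaP_eq: "\<iota>P x = enc (\<iota>1 x, \<iota>2 x)" unfolding pincl_def by simp

lemma Fi_P: "Fi L \<iota>P = FP" unfolding Fi_def iotaP_eq by simp

lemma F_pair_in: "(F1, F2) \<in> pairs"
  using pairsI m1.F_in m2.F_in m1.proj_F m2.proj_F by simp

lemma FP_in: "FP \<in> lcar P" using enc_mem_P F_pair_in by simp

lemma lift1_eq: assumes "H \<in> lcar E1" shows "lift1 L \<iota>1 E2 \<iota>2 H = enc (plift1 H)"
  unfolding lift1_def plift1_def using m1.in_iota_image_iff[OF assms] m1.the_inv_into_iota[OF assms] by simp

lemma lift2_eq: assumes "H \<in> lcar E2" shows "lift2 L E1 \<iota>1 \<iota>2 H = enc (plift2 H)"
  unfolding lift2_def plift2_def using m2.in_iota_image_iff[OF assms] m2.the_inv_into_iota[OF assms] by simp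

lemma iotaP_join: assumes x: "x \<in> lcar L" and y: "y \<in> lcar L"
  shows "\<iota>P (join L x y) = join P (\<iota>P x) (\<iota>P y)"
proof -
  have xy: "join L x y \<in> lcar L" using x y by simp
  have "pair_join (\<iota>1 x, \<iota>2 x) (\<iota>1 y, \<iota>2 y) = (\<iota>1 (join L x y), \<iota>2 (join L x y))"
    unfolding pair_join_def Let_def
    using m1.iota_join[OF x y] m2.iota_join[OF x y] m1.proj_iota[OF xy] m2.proj_iota[OF xy] m1.L.join_idem[OF xy]
      m1.E.join_idem[OF m1.iota_in[OF xy]] m2.E.join_idem[OF m2.iota_in[OF xy]] by simp
  then show ?thesis using join_P[OF iota_pair_in[OF x] iota_pair_in[OF y]] iotaP_eq by simp
qed

lemma iotaP_atom: assumes a: "a \<in> atoms L" shows "\<iota>P a \<in> atoms P"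
proof -
  have aL: "a \<in> lcar L" using m1.L.atoms_in[OF a] .
  have ia: "\<iota>1 a \<in> atoms E1" using m1.iota_atoms a by blast
  have "plift1 (\<iota>1 a) = (\<iota>1 a, \<iota>2 a)" unfolding plift1_def using m1.iota_le_F[OF aL] m1.proj_iota[OF aL] by simp
  then show ?thesis using plift1_atom[OF ia] iotaP_eq by simp
qed

lemma iotaP_embedding: "embedding L P \<iota>P"
  unfolding embedding_def
proof (intro conjI ballI impI)
  show "inj_on \<iota>P (lcar L)"
  proof (rule inj_onI)
    fix x y assume "x \<in> lcar L" "y \<in> lcar L" "\<iota>P x = \<iota>P y"
    then show "x = y" using m1.iota_inj inj_prod_encode unfolding iotaP_eq inj_on_def inj_def by auto
  qed
  show "\<iota>P ` lcar L \<subseteq> lcar P" using iota_pair_in enc_mem_P iotaP_eq by auto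
  show "\<iota>P ` atoms L \<subseteq> atoms P" using iotaP_atom by blast
  fix x y assume x: "x \<in> lcar L" and y: "y \<in> lcar L"
  show "\<iota>P (join L x y) = join P (\<iota>P x) (\<iota>P y)" using iotaP_join[OF x y] .
  assume "lle L x y"
  then show "lle P (\<iota>P x) (\<iota>P y)" unfolding le_P iotaP_eq pair_le_def using m1.iota_mono m2.iota_mono x y by simp
qed

lemma iotaP_image: "\<iota>P ` lcar L = interval P (bot P) FP"
proof
  show "\<iota>P ` lcar L \<subseteq> interval P (bot P) FP"
  proof
    fix z assume "z \<in> \<iota>P ` lcar L"
    then obtain x where x: "x \<in> lcar L" "z = \<iota>P x" by blast
    have zC: "z \<in> lcar P" using x iota_pair_in enc_mem_P iotaP_eq by simp
    moreover have "lle P z FP" unfolding x(2) iotaP_eq le_P pair_le_def using m1.iota_le_F[OF x(1)] m2.iota_le_F[OF x(1)] by simp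
    ultimately show "z \<in> interval P (bot P) FP" unfolding interval_def using P.bot_le by simp
  qed
  show "interval P (bot P) FP \<subseteq> \<iota>P ` lcar L"
  proof
    fix z assume "z \<in> interval P (bot P) FP"
    then have zC: "z \<in> lcar P" and zF: "lle P z FP" unfolding interval_def by auto
    have zP: "dec z \<in> pairs" using zC mem_P by simp
    have A: "fst (dec z) \<in> lcar E1" "snd (dec z) \<in> lcar E2" and t: "m1.proj (fst (dec z)) = m2.proj (snd (dec z))"
      using pairsD[OF zP] by auto
    have l: "lle E1 (fst (dec z)) F1" "lle E2 (snd (dec z)) F2" using zF unfolding le_P pair_le_def by auto
    obtain z1 where z1: "z1 \<in> lcar L" "fst (dec z) = \<iota>1 z1" using m1.below_F_in_image[OF A(1) l(1)] by blast
    obtain z2 where z2: "z2 \<in> lcar L" "snd (dec z) = \<iota>2 z2" using m2.below_F_in_image[OF A(2) l(2)] by blast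
    have "z1 = z2" using t z1 z2 m1.proj_iota m2.proj_iota by simp
    then have "dec z = (\<iota>1 z1, \<iota>2 z1)" using z1 z2 by (simp add: prod_eq_iff)
    then have "z = \<iota>P z1" unfolding iotaP_eq by (metis prod_decode_inverse)
    then show "z \<in> \<iota>P ` lcar L" using z1 by blast
  qed
qed

lemma meet_FP:
  assumes a: "a \<in> pairs"
  shows "meet P (enc a) FP = \<iota>P (m1.proj (fst a))"
proof -
  have A: "fst a \<in> lcar E1" "snd a \<in> lcar E2" and t: "m1.proj (fst a) = m2.proj (snd a)"
    using pairsD[OF a] by auto
  have "pair_meet a (F1, F2) = (\<iota>1 (m1.proj (fst a)), \<iota>2 (m1.proj (fst a)))"
    unfolding pair_meet_def using m1.iota_proj[OF A(1)] m2.iota_proj[OF A(2)] t by simp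
  then show ?thesis using meet_P[OF a F_pair_in] iotaP_eq by simp
qed

lemma rk_iotaP: "x \<in> lcar L \<Longrightarrow> rk P (\<iota>P x) = rk L x"
  using rk_P[OF enc_mem_P[THEN iffD2, OF iota_pair_in]] m1.rk_iota m2.rk_iota m1.proj_iota
  unfolding iotaP_eq pair_rk_def by simp

lemma modular_flat_FP: "modular_flat P FP"
  unfolding modular_flat_def
proof (intro conjI ballI)
  show "FP \<in> lcar P" by (rule FP_in)
  fix G assume G: "G \<in> lcar P"
  define a where "a = dec G"
  have a: "a \<in> pairs" and Ga: "G = enc a" unfolding a_def using G mem_P by auto
  have A: "fst a \<in> lcar E1" "snd a \<in> lcar E2" and t: "m1.proj (fst a) = m2.proj (snd a)"
    using pairsD[OF a] by auto
  have j: "join P G FP = enc (pair_join a (F1, F2))" using join_P[OF a F_pair_in] Ga by simp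
  have "rk P (join P G FP) + rk L (top L) = rk E1 (join E1 (fst a) F1) + rk E2 (join E2 (snd a) F2)"
    using pair_rk_via_F1[OF pair_join_in[OF a F_pair_in]] pair_join_below_F1[OF a F_pair_in] m1.E.refl[OF m1.F_in]
      rk_P[OF P.join_in[OF G FP_in]] j by simp
  moreover have "rk P G + rk L (top L) = rk E1 (join E1 (fst a) F1) + rk E2 (snd a)"
    using pair_rk_via_F1[OF a] rk_P[OF G] Ga by simp
  moreover have "rk P (meet P G FP) = rk L (m2.proj (snd a))"
    using meet_FP[OF a] rk_iotaP m1.proj_in[OF A(1)] Ga t by simp
  moreover have "rk P FP = rk L (top L)" using rk_iotaP[OF m1.L.top_in] iotaP_eq unfolding Fi_def by simp
  moreover have "rk E2 (snd a) + rk L (top L) = rk L (m2.proj (snd a)) + rk E2 (join E2 (snd a) F2)"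
    using m2.rk_join_F[OF A(2)] .
  ultimately show "rk P (meet P FP G) + rk P (join P FP G) = rk P FP + rk P G"
    using P.meet_comm[of FP G] P.join_comm[of FP G] by simp
qed

lemma mod_ext_P: "mod_ext L P \<iota>P"
  unfolding mod_ext_def using geometric_P iotaP_embedding modular_flat_FP iotaP_image by blast

lemma mod_extension_P: "mod_extension L P \<iota>P" by (rule mod_extension.intro[OF m1.geom_L mod_ext_P])

lemma proj_P: assumes a: "a \<in> pairs" shows "mod_extension.proj L P \<iota>P (enc a) = m1.proj (fst a)"
proof -
  interpret mP: mod_extension L P \<iota>P by (rule mod_extension_P)
  have "fst a \<in> lcar E1" using pairsD[OF a] by simp
  then show ?thesis
    using mP.proj_eqI[OF enc_mem_P[THEN iffD2, OF a] m1.proj_in] meet_FP[OF a] unfolding Fi_P by simp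
qed

lemma plift1_below_F: "H \<in> atoms E1 \<Longrightarrow> lle E1 H F1 \<Longrightarrow> plift1 H = (\<iota>1 (m1.proj H), \<iota>2 (m1.proj H))"
  unfolding plift1_def using m1.atom_below_F by simp
lemma plift1_not_below_F: "\<not> lle E1 H F1 \<Longrightarrow> plift1 H = (H, bot E2)"
  unfolding plift1_def by simp
lemma plift2_below_F: "H \<in> atoms E2 \<Longrightarrow> lle E2 H F2 \<Longrightarrow> plift2 H = (\<iota>1 (m2.proj H), \<iota>2 (m2.proj H))"
  unfolding plift2_def using m2.atom_below_F by simp
lemma plift2_not_below_F: "\<not> lle E2 H F2 \<Longrightarrow> plift2 H = (bot E1, H)"
  unfolding plift2_def by simp

lemma iota_pair_le_FP: "x \<in> lcar L \<Longrightarrow> lle P (enc (\<iota>1 x, \<iota>2 x)) FP"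
  unfolding le_P pair_le_def using m1.iota_le_F m2.iota_le_F by simp

lemma proj_P_iota: "x \<in> lcar L \<Longrightarrow> mod_extension.proj L P \<iota>P (enc (\<iota>1 x, \<iota>2 x)) = x"
  using proj_P[OF iota_pair_in] m1.proj_iota by simp

lemma lifts_below_iff:
  assumes J1: "set J1 \<subseteq> lcar E1" and J2: "set J2 \<subseteq> lcar E2"
    and b: "b \<in> pairs" and Fb: "lle P FP (enc b)"
  shows "(\<forall>q \<in> enc ` plift1 ` set J1 \<union> enc ` plift2 ` set J2. lle P q (enc b)) \<longleftrightarrow>
    lle E1 (Join E1 (set J1)) (fst b) \<and> lle E2 (Join E2 (set J2)) (snd b)"
proof -
  have B: "fst b \<in> lcar E1" "snd b \<in> lcar E2" using pairsD[OF b] by auto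
  have F: "lle E1 F1 (fst b)" "lle E2 F2 (snd b)" using Fb unfolding le_P pair_le_def by simp_all
  have "lle P (enc (plift1 H)) (enc b) \<longleftrightarrow> lle E1 H (fst b)" if "H \<in> set J1" for H
    using m2.E.trans[OF snd_plift1_in m2.F_in B(2) plift1_below_F2 F(2)] J1 that
    unfolding le_P pair_le_def by auto
  moreover have "lle P (enc (plift2 H)) (enc b) \<longleftrightarrow> lle E2 H (snd b)" if "H \<in> set J2" for H
    using m1.E.trans[OF fst_plift2_in m1.F_in B(1) plift2_below_F1 F(1)] J2 that
    unfolding le_P pair_le_def by auto
  ultimately show ?thesis using m1.E.Join_le_iff[OF J1 B(1)] m2.E.Join_le_iff[OF J2 B(2)] by auto
qed

lemma join_FP_Join_lifts:
  assumes J1: "set J1 \<subseteq> atoms E1" and J2: "set J2 \<subseteq> atoms E2"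
  defines "Y1 \<equiv> join E1 (Join E1 (set J1)) F1" and "Y2 \<equiv> join E2 (Join E2 (set J2)) F2"
  shows "join P (Join P (enc ` plift1 ` set J1 \<union> enc ` plift2 ` set J2)) FP = enc (Y1, Y2)"
proof -
  let ?J = "enc ` plift1 ` set J1 \<union> enc ` plift2 ` set J2"
  have J1C: "set J1 \<subseteq> lcar E1" and J2C: "set J2 \<subseteq> lcar E2"
    using J1 J2 m1.E.atoms_in m2.E.atoms_in by auto
  have S: "Join E1 (set J1) \<in> lcar E1" "Join E2 (set J2) \<in> lcar E2"
    using m1.E.Join_in[OF J1C] m2.E.Join_in[OF J2C] .
  have JP: "?J \<subseteq> lcar P" using J1 J2 plift1_atom plift2_atom unfolding atoms_def by auto
  have Y: "(Y1, Y2) \<in> pairs"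
    unfolding Y1_def Y2_def using pairsI S m1.F_in m2.F_in m1.proj_join_F m2.proj_join_F by simp
  have FY: "lle P FP (enc (Y1, Y2))"
    unfolding Y1_def Y2_def le_P pair_le_def using m1.E.join_ub2 m2.E.join_ub2 S m1.F_in m2.F_in by simp
  show ?thesis
  proof (rule P.join_eq)
    show "Join P ?J \<in> lcar P" "FP \<in> lcar P" "enc (Y1, Y2) \<in> lcar P"
      using P.Join_in[OF JP] FP_in Y enc_mem_P by auto
    show "lle P FP (enc (Y1, Y2))" by (rule FY)
    have "lle E1 (Join E1 (set J1)) Y1" "lle E2 (Join E2 (set J2)) Y2"
      unfolding Y1_def Y2_def using m1.E.join_ub1 m2.E.join_ub1 S m1.F_in m2.F_in by auto
    then show "lle P (Join P ?J) (enc (Y1, Y2))"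
      using lifts_below_iff[OF J1C J2C Y FY] P.Join_le_iff[OF JP] Y enc_mem_P by simp
    fix w assume w: "w \<in> lcar P" "lle P (Join P ?J) w" "lle P FP w"
    have W: "dec w \<in> pairs" using w(1) mem_P by simp
    then have "lle E1 (Join E1 (set J1)) (fst (dec w))" "lle E2 (Join E2 (set J2)) (snd (dec w))"
      using lifts_below_iff[OF J1C J2C W] P.Join_le_iff[OF JP w(1)] w(2,3) by simp_all
    moreover have "lle E1 F1 (fst (dec w))" "lle E2 F2 (snd (dec w))"
      using w(3) unfolding le_P pair_le_def by simp_all
    ultimately show "lle P (enc (Y1, Y2)) w"
      using pairsD[OF W] m1.E.join_least[OF S(1) m1.F_in] m2.E.join_least[OF S(2) m2.F_in]
      unfolding le_P pair_le_def Y1_def Y2_def by simp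
  qed
qed

lemma set_lifted_word:
  assumes "set J1 \<subseteq> lcar E1" and "set J2 \<subseteq> lcar E2"
  shows "set (map (lift1 L \<iota>1 E2 \<iota>2) J1 @ map (lift2 L E1 \<iota>1 \<iota>2) J2)
    = enc ` plift1 ` set J1 \<union> enc ` plift2 ` set J2"
proof -
  have "lift1 L \<iota>1 E2 \<iota>2 ` set J1 = (\<lambda>H. enc (plift1 H)) ` set J1"
    by (rule image_cong[OF refl]) (use lift1_eq assms in auto)
  moreover have "lift2 L E1 \<iota>1 \<iota>2 ` set J2 = (\<lambda>H. enc (plift2 H)) ` set J2"
    by (rule image_cong[OF refl]) (use lift2_eq assms in auto)
  ultimately show ?thesis by (simp add: image_image)
qed

lemma rk_P_above_FP:
  assumes a: "a \<in> pairs" and F: "lle E1 F1 (fst a)"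
  shows "rk P (enc a) + rk L (top L) = rk E1 (fst a) + rk E2 (snd a)"
  using pair_rk_via_F1[OF a] rk_P[of "enc a"] enc_mem_P a m1.E.join_absorb2[OF _ m1.F_in F] pairsD
  by simp

lemma deg_pushout:
  assumes J1: "set J1 \<subseteq> atoms E1" and J2: "set J2 \<subseteq> atoms E2"
  shows "deg L (P, \<iota>P, map (lift1 L \<iota>1 E2 \<iota>2) J1 @ map (lift2 L E1 \<iota>1 \<iota>2) J2)
       = deg L (E1, \<iota>1, J1) + deg L (E2, \<iota>2, J2)"
proof -
  interpret mP: mod_extension L P \<iota>P by (rule mod_extension_P)
  define J where "J = map (lift1 L \<iota>1 E2 \<iota>2) J1 @ map (lift2 L E1 \<iota>1 \<iota>2) J2"
  define Y1 where "Y1 = join E1 (Join E1 (set J1)) F1"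
  define Y2 where "Y2 = join E2 (Join E2 (set J2)) F2"
  have J1C: "set J1 \<subseteq> lcar E1" and J2C: "set J2 \<subseteq> lcar E2"
    using J1 J2 m1.E.atoms_in m2.E.atoms_in by auto
  note setJ = set_lifted_word[OF J1C J2C, folded J_def]
  have "set J \<subseteq> lcar P" unfolding setJ using J1 J2 plift1_atom plift2_atom unfolding atoms_def by auto
  then have "deg L (P, \<iota>P, J) = int (length J) - 2 * (int (rk P (join P (Join P (set J)) FP)) - int (rk L (top L)))"
    using mP.deg_eq_join_F unfolding Fi_P by blast
  also have "join P (Join P (set J)) FP = enc (Y1, Y2)"
    using join_FP_Join_lifts[OF J1 J2] unfolding setJ Y1_def Y2_def .
  finally have "deg L (P, \<iota>P, J) = int (length J) - 2 * (int (rk P (enc (Y1, Y2))) - int (rk L (top L)))" .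
  moreover have "rk P (enc (Y1, Y2)) + rk L (top L) = rk E1 Y1 + rk E2 Y2"
    using rk_P_above_FP pairsI m1.E.join_ub2 m1.E.Join_in[OF J1C] m2.E.Join_in[OF J2C] m1.F_in m2.F_in
      m1.proj_join_F m2.proj_join_F unfolding Y1_def Y2_def by simp
  moreover have "deg L (E1, \<iota>1, J1) = int (length J1) - 2 * (int (rk E1 Y1) - int (rk L (top L)))"
    using m1.deg_eq_join_F[OF J1C] unfolding Y1_def .
  moreover have "deg L (E2, \<iota>2, J2) = int (length J2) - 2 * (int (rk E2 Y2) - int (rk L (top L)))"
    using m2.deg_eq_join_F[OF J2C] unfolding Y2_def .
  moreover have "int (length J) = int (length J1) + int (length J2)" unfolding J_def by simp
  ultimately show ?thesis unfolding J_def[symmetric] by (simp only: algebra_simps of_nat_add[symmetric])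
qed

lemma bij_swap_P: "bij_betw (\<lambda>z. enc (prod.swap (dec z))) (lcar (pushout L E2 \<iota>2 E1 \<iota>1)) (lcar P)"
proof -
  interpret sw: pushout_pair L E2 E1 \<iota>2 \<iota>1 by (rule pushout_pair_swap)
  show ?thesis
  proof (rule bij_betw_byWitness[where f' = "\<lambda>z. enc (prod.swap (dec z))"])
    show "(\<lambda>z. enc (prod.swap (dec z))) ` lcar sw.P \<subseteq> lcar P"
      using sw.mem_P mem_P swap_pushout(1) by auto
    show "(\<lambda>z. enc (prod.swap (dec z))) ` lcar P \<subseteq> lcar sw.P"
      using sw.mem_P mem_P swap_pushout(1) by auto
  qed simp_all
qed

end

lemma mod_extension_of_diag: "geometric L \<Longrightarrow> is_diag L (E, \<iota>, J) \<Longrightarrow> mod_extension L E \<iota>"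
  by (rule mod_extension.intro) auto

lemma pushout_pair_of_diag: "geometric L \<Longrightarrow> is_diag L (E1, \<iota>1, J1) \<Longrightarrow> is_diag L (E2, \<iota>2, J2) \<Longrightarrow> pushout_pair L E1 E2 \<iota>1 \<iota>2"
  using mod_extension_of_diag by (intro pushout_pair.intro) blast+

lemma dprod_diag:
  assumes geom_L: "geometric L" and d1: "is_diag L (E1, \<iota>1, J1)" and d2: "is_diag L (E2, \<iota>2, J2)"
  shows "is_diag L (dprod L (E1, \<iota>1, J1) (E2, \<iota>2, J2))"
proof -
  interpret pushout_pair L E1 E2 \<iota>1 \<iota>2 using pushout_pair_of_diag[OF geom_L d1 d2] .
  have J1: "set J1 \<subseteq> atoms E1" and J2: "set J2 \<subseteq> atoms E2" using d1 d2 by auto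
  have "set (map (lift1 L \<iota>1 E2 \<iota>2) J1) \<subseteq> atoms P"
    using J1 lift1_eq plift1_atom m1.E.atoms_in by auto
  moreover have "set (map (lift2 L E1 \<iota>1 \<iota>2) J2) \<subseteq> atoms P"
    using J2 lift2_eq plift2_atom m2.E.atoms_in by auto
  ultimately show ?thesis using mod_ext_P by simp
qed

section \<open>Relations in the space of modular diagrams\<close>

lemma Rspan_add: "u \<in> Rspan L \<Longrightarrow> v \<in> Rspan L \<Longrightarrow> (\<lambda>d. u d + v d) \<in> Rspan L"
proof (induction u rule: Rspan.induct)
  case (step g w c)
  have "(\<lambda>d. c * g d + (w d + v d)) \<in> Rspan L" using Rspan.step[OF step.hyps(1) step.IH[OF step.prems]] .
  then show ?case by (simp add: add.assoc)
qed simp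

lemma Rspan_smult: "v \<in> Rspan L \<Longrightarrow> (\<lambda>d. c * v d) \<in> Rspan L"
proof (induction v rule: Rspan.induct)
  case (step g w c')
  have "(\<lambda>d. c * (c' * g d + w d)) = (\<lambda>d. (c * c') * g d + c * w d)" by (simp add: algebra_simps)
  then show ?case using Rspan.step[OF step.hyps(1) step.IH] by simp
qed (simp add: Rspan.zero)

lemma MDeq_gen: "(\<lambda>d. x d - y d) \<in> Rgen L \<Longrightarrow> MDeq L x y"
  unfolding MDeq_def using Rspan.step[OF _ Rspan.zero, of _ L 1] by simp

lemma MDeq_refl: "MDeq L x x"
  unfolding MDeq_def using Rspan.zero by simp

lemma MDeq_sym: assumes "MDeq L x y" shows "MDeq L y x"
proof -
  have "(\<lambda>d. (-1) * (x d - y d)) \<in> Rspan L" using Rspan_smult assms unfolding MDeq_def by blast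
  then show ?thesis unfolding MDeq_def by simp
qed

lemma MDeq_trans: "MDeq L x y \<Longrightarrow> MDeq L y z \<Longrightarrow> MDeq L x z"
  unfolding MDeq_def using Rspan_add by fastforce

lemma MDeq_smult: assumes "MDeq L x y" shows "MDeq L (\<lambda>d. c * x d) (\<lambda>d. c * y d)"
proof -
  have "(\<lambda>d. c * (x d - y d)) \<in> Rspan L" using Rspan_smult assms unfolding MDeq_def by blast
  then show ?thesis unfolding MDeq_def by (simp add: right_diff_distrib)
qed

lemma MDeq_scaled_trans:
  assumes "MDeq L x (\<lambda>d. a * y d)" and "MDeq L y (\<lambda>d. b * z d)"
  shows "MDeq L x (\<lambda>d. (a * b) * z d)"
  using MDeq_trans[OF assms(1) MDeq_smult[OF assms(2), of a]] by (simp add: mult.assoc)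

lemma MDeq_swap_adjacent:
  assumes "is_diag L (E, \<iota>, A @ [a, b] @ B)"
  shows "MDeq L (delta (E, \<iota>, A @ [a, b] @ B)) (\<lambda>d. (-1) * delta (E, \<iota>, A @ [b, a] @ B) d)"
proof (rule MDeq_gen)
  let ?J = "A @ [a, b] @ B"
  have "?J[length A := ?J ! Suc (length A), Suc (length A) := ?J ! length A] = A @ [b, a] @ B"
    by (simp add: list_update_append nth_append)
  then have "(\<lambda>d. delta (E, \<iota>, ?J) d + delta (E, \<iota>, A @ [b, a] @ B) d) \<in> Rgen L"
    unfolding Rgen_def using assms
    by (intro UnI1 CollectI exI[of _ E] exI[of _ \<iota>] exI[of _ ?J] exI[of _ "A @ [b, a] @ B"]
        exI[of _ "length A"] exI[of _ "Suc (length A)"]) simp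
  then show "(\<lambda>d. delta (E, \<iota>, ?J) d - (-1) * delta (E, \<iota>, A @ [b, a] @ B) d) \<in> Rgen L" by simp
qed

lemma MDeq_move:
  "is_diag L (E, \<iota>, A @ [b] @ B @ C) \<Longrightarrow>
   MDeq L (delta (E, \<iota>, A @ [b] @ B @ C)) (\<lambda>d. (-1) ^ length B * delta (E, \<iota>, A @ B @ [b] @ C) d)"
proof (induction B arbitrary: A)
  case Nil
  then show ?case using MDeq_refl by simp
next
  case (Cons c B)
  have "MDeq L (delta (E, \<iota>, A @ [b, c] @ B @ C)) (\<lambda>d. (-1) * delta (E, \<iota>, A @ [c, b] @ B @ C) d)"
    using MDeq_swap_adjacent Cons.prems by simp
  moreover have "MDeq L (delta (E, \<iota>, A @ [c, b] @ B @ C))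
      (\<lambda>d. (-1) ^ length B * delta (E, \<iota>, A @ c # B @ [b] @ C) d)"
    using Cons.IH[of "A @ [c]"] Cons.prems by simp
  ultimately show ?case using MDeq_scaled_trans by fastforce
qed

lemma MDeq_swap_blocks:
  "is_diag L (E, \<iota>, A @ X @ Y) \<Longrightarrow>
   MDeq L (delta (E, \<iota>, A @ X @ Y)) (\<lambda>d. (-1) ^ (length X * length Y) * delta (E, \<iota>, A @ Y @ X) d)"
proof (induction X arbitrary: A)
  case Nil
  then show ?case using MDeq_refl by simp
next
  case (Cons x X)
  have "MDeq L (delta (E, \<iota>, A @ x # X @ Y))
      (\<lambda>d. (-1) ^ (length X * length Y) * delta (E, \<iota>, A @ [x] @ Y @ X) d)"
    using Cons.IH[of "A @ [x]"] Cons.prems by simp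
  moreover have "MDeq L (delta (E, \<iota>, A @ [x] @ Y @ X))
      (\<lambda>d. (-1) ^ length Y * delta (E, \<iota>, A @ Y @ [x] @ X) d)"
    using MDeq_move[of L E \<iota> A x Y X] Cons.prems by auto
  ultimately show ?case using MDeq_scaled_trans by (fastforce simp: power_add mult.commute)
qed

(* deg \<Gamma> and the length of its word differ by an even number. *)
lemma sign_deg_mult:
  "(-1::rat) ^ nat \<bar>deg L (E1, \<iota>1, J1) * deg L (E2, \<iota>2, J2)\<bar> = (-1) ^ (length J1 * length J2)"
proof -
  have "even (nat \<bar>deg L (E1, \<iota>1, J1) * deg L (E2, \<iota>2, J2)\<bar>) \<longleftrightarrow> even (length J1 * length J2)"
    using even_nat_iff[of "\<bar>deg L (E1, \<iota>1, J1) * deg L (E2, \<iota>2, J2)\<bar>"] by simp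
  then show ?thesis by (simp add: minus_one_power_iff)
qed

lemma MDeq_order_iso:
  assumes d: "is_diag L (E, \<iota>, J)" and d': "is_diag L (E', \<iota>', J')"
    and bij: "bij_betw \<phi> (lcar E) (lcar E')"
    and le_iff: "\<And>x y. x \<in> lcar E \<Longrightarrow> y \<in> lcar E \<Longrightarrow> lle E x y \<longleftrightarrow> lle E' (\<phi> x) (\<phi> y)"
    and iota: "\<And>x. x \<in> lcar L \<Longrightarrow> \<iota>' x = \<phi> (\<iota> x)" and word: "J' = map \<phi> J"
  shows "MDeq L (delta (E, \<iota>, J)) (delta (E', \<iota>', J'))"
proof (rule MDeq_gen)
  interpret geometric_order_iso E E' \<phi>
    using d d' bij le_iff by (intro geometric_order_isoI) (auto simp: mod_ext_def)
  have "(\<lambda>d. delta (E, \<iota>, J) d - delta (E', \<iota>', J') d) \<in>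
    {\<lambda>d. delta (E, \<iota>, J) d - delta (E', \<iota>', J') d | E \<iota> J E' \<iota>' J' \<phi>.
       is_diag L (E, \<iota>, J) \<and> is_diag L (E', \<iota>', J') \<and> embedding E E' \<phi> \<and>
       rk E (top E) = rk E' (top E') \<and> (\<forall>x\<in>lcar L. \<iota>' x = \<phi> (\<iota> x)) \<and> J' = map \<phi> J}"
    using d d' embedding rk_top iota word by blast
  then show "(\<lambda>d. delta (E, \<iota>, J) d - delta (E', \<iota>', J') d) \<in> Rgen L" unfolding Rgen_def by blast
qed

lemma is_diag_unit: assumes geom_L: "geometric L" shows "is_diag L (L, id, [])"
proof -
  interpret g: geometric_rank L "rk L" using geometric_rank_rk[OF geom_L] .
  have emb: "embedding L L id" unfolding embedding_def by simp
  have mf: "modular_flat L (top L)" unfolding modular_flat_def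
  proof (intro conjI ballI)
    show "top L \<in> lcar L" by simp
    fix G assume G: "G \<in> lcar L"
    have "meet L (top L) G = G" using g.meet_absorb2[OF g.top_in G g.le_top[OF G]] .
    moreover have "join L (top L) G = top L" using g.join_absorb2[OF g.top_in G g.le_top[OF G]] .
    ultimately show "rk L (meet L (top L) G) + rk L (join L (top L) G) = rk L (top L) + rk L G" by simp
  qed
  have "id ` lcar L = interval L (bot L) (top L)" unfolding interval_def using g.bot_le g.le_top by auto
  then have "mod_ext L L id" unfolding mod_ext_def using geom_L emb mf by blast
  then show ?thesis by simp
qed

lemma MDeq_unit_left:
  assumes geom_L: "geometric L" and d: "is_diag L (E, \<iota>, J)"
  shows "MDeq L (delta (E, \<iota>, J)) (delta (dprod L (L, id, []) (E, \<iota>, J)))"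
proof -
  have du: "is_diag L (L, id, [])" using is_diag_unit[OF geom_L] .
  interpret pushout_pair L L E id \<iota> using pushout_pair_of_diag[OF geom_L du d] .
  define \<phi> where "\<phi> = (\<lambda>X. enc (m2.proj X, X))"
  have proj_L: "m1.proj x = x" if "x \<in> lcar L" for x using m1.proj_iota[OF that] by simp
  have bij: "bij_betw \<phi> (lcar E) (lcar P)"
  proof (rule bij_betw_byWitness[where f' = "\<lambda>z. snd (dec z)"])
    show "\<forall>z\<in>lcar P. \<phi> (snd (dec z)) = z"
      using mem_P pairsD proj_L unfolding \<phi>_def by (metis prod.collapse prod_decode_inverse)
    show "\<phi> ` lcar E \<subseteq> lcar P" using pairsI m2.proj_in proj_L enc_mem_P unfolding \<phi>_def by auto
    show "(\<lambda>z. snd (dec z)) ` lcar P \<subseteq> lcar E" using mem_P pairsD by blast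
  qed (simp add: \<phi>_def)
  have le: "lle E X Y \<longleftrightarrow> lle P (\<phi> X) (\<phi> Y)" if "X \<in> lcar E" "Y \<in> lcar E" for X Y
    unfolding \<phi>_def le_P pair_le_def using m2.proj_mono that by auto
  have iota: "\<iota>P x = \<phi> (\<iota> x)" if "x \<in> lcar L" for x
    unfolding \<phi>_def iotaP_eq using m2.proj_iota that by simp
  have word: "map (lift2 L L id \<iota>) J = map \<phi> J"
    using d lift2_eq m2.E.atoms_in m2.proj_atom_not_below_F unfolding plift2_def \<phi>_def
    by (auto intro!: map_cong)
  have "is_diag L (P, \<iota>P, map (lift2 L L id \<iota>) J)" using dprod_diag[OF geom_L du d] by simp
  then show ?thesis using MDeq_order_iso[OF d _ bij le iota word] by simp
qed

lemma MDeq_dprod_swap: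
  assumes geom_L: "geometric L" and d1: "is_diag L (E1, \<iota>1, J1)" and d2: "is_diag L (E2, \<iota>2, J2)"
  shows "MDeq L (delta (dprod L (E2, \<iota>2, J2) (E1, \<iota>1, J1)))
    (delta (pushout L E1 \<iota>1 E2 \<iota>2, pincl \<iota>1 \<iota>2, map (lift2 L E1 \<iota>1 \<iota>2) J2 @ map (lift1 L \<iota>1 E2 \<iota>2) J1))"
proof -
  interpret pushout_pair L E1 E2 \<iota>1 \<iota>2 using pushout_pair_of_diag[OF geom_L d1 d2] .
  interpret sw: pushout_pair L E2 E1 \<iota>2 \<iota>1 by (rule pushout_pair_swap)
  define \<phi> where "\<phi> = (\<lambda>z. enc (prod.swap (dec z)))"
  have J1: "set J1 \<subseteq> lcar E1" and J2: "set J2 \<subseteq> lcar E2" using d1 d2 m1.E.atoms_in m2.E.atoms_in by auto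
  have word: "map (lift2 L E1 \<iota>1 \<iota>2) J2 @ map (lift1 L \<iota>1 E2 \<iota>2) J1
     = map \<phi> (map (lift1 L \<iota>2 E1 \<iota>1) J2 @ map (lift2 L E2 \<iota>2 \<iota>1) J1)"
    using J1 J2 sw.lift1_eq lift2_eq sw.lift2_eq lift1_eq swap_pushout(2)
    unfolding \<phi>_def sw.plift1_def plift2_def by (auto intro!: map_cong)
  have dA: "is_diag L (sw.P, sw.\<iota>P, map (lift1 L \<iota>2 E1 \<iota>1) J2 @ map (lift2 L E2 \<iota>2 \<iota>1) J1)"
    using dprod_diag[OF geom_L d2 d1] by simp
  have dB: "is_diag L (P, \<iota>P, map (lift2 L E1 \<iota>1 \<iota>2) J2 @ map (lift1 L \<iota>1 E2 \<iota>2) J1)"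
    using dprod_diag[OF geom_L d1 d2] by auto
  have le: "lle sw.P x y \<longleftrightarrow> lle P (\<phi> x) (\<phi> y)" for x y
    unfolding \<phi>_def le_P sw.le_P pair_le_def sw.pair_le_def by auto
  have iota: "\<iota>P x = \<phi> (sw.\<iota>P x)" for x unfolding \<phi>_def iotaP_eq sw.iotaP_eq by simp
  show ?thesis using MDeq_order_iso[OF dA dB bij_swap_P[folded \<phi>_def] le iota word] by simp
qed

locale pushout_triple =
  p12: pushout_pair L E1 E2 \<iota>1 \<iota>2 + p23: pushout_pair L E2 E3 \<iota>2 \<iota>3
  for L E1 E2 E3 :: lat and \<iota>1 \<iota>2 \<iota>3 :: "nat \<Rightarrow> nat"
begin

sublocale pA: pushout_pair L p12.P E3 p12.\<iota>P \<iota>3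
  by (rule pushout_pair.intro[OF p12.mod_extension_P p23.m2.mod_extension_axioms])

sublocale pB: pushout_pair L E1 p23.P \<iota>1 p23.\<iota>P
  by (rule pushout_pair.intro[OF p12.m1.mod_extension_axioms p23.mod_extension_P])

definition compatible :: "nat \<Rightarrow> nat \<Rightarrow> nat \<Rightarrow> bool" where
  "compatible X1 X2 X3 \<longleftrightarrow> X1 \<in> lcar E1 \<and> X2 \<in> lcar E2 \<and> X3 \<in> lcar E3 \<and>
     p12.m1.proj X1 = p12.m2.proj X2 \<and> p12.m2.proj X2 = p23.m2.proj X3"

definition reassoc :: "nat \<Rightarrow> nat" where
  "reassoc z = enc (fst (dec (fst (dec z))), enc (snd (dec (fst (dec z))), snd (dec z)))"

definition unassoc :: "nat \<Rightarrow> nat" where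
  "unassoc w = enc (enc (fst (dec w), fst (dec (snd (dec w)))), snd (dec (snd (dec w))))"

lemma reassoc_enc [simp]: "reassoc (enc (enc (X1, X2), X3)) = enc (X1, enc (X2, X3))"
  unfolding reassoc_def by simp

lemma unassoc_enc [simp]: "unassoc (enc (X1, enc (X2, X3))) = enc (enc (X1, X2), X3)"
  unfolding unassoc_def by simp

lemma left_assoc_cases: obtains X1 X2 X3 where "z = enc (enc (X1, X2), X3)"
  by (metis prod_decode_inverse prod.collapse)

lemma right_assoc_cases: obtains X1 X2 X3 where "z = enc (X1, enc (X2, X3))"
  by (metis prod_decode_inverse prod.collapse)

lemma mem_PA: "enc (enc (X1, X2), X3) \<in> lcar pA.P \<longleftrightarrow> compatible X1 X2 X3"
proof
  assume "enc (enc (X1, X2), X3) \<in> lcar pA.P"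
  then have a: "enc (X1, X2) \<in> lcar p12.P" "X3 \<in> lcar E3"
    "pA.m1.proj (enc (X1, X2)) = p23.m2.proj X3"
    using pA.pairsD pA.enc_mem_P by auto
  have "(X1, X2) \<in> p12.pairs" using a(1) p12.enc_mem_P by simp
  then show "compatible X1 X2 X3" unfolding compatible_def using a p12.pairsD p12.proj_P by auto
next
  assume t: "compatible X1 X2 X3"
  then have b: "(X1, X2) \<in> p12.pairs" unfolding compatible_def using p12.pairsI by simp
  then show "enc (enc (X1, X2), X3) \<in> lcar pA.P"
    using pA.pairsI p12.enc_mem_P p12.proj_P[OF b] t pA.enc_mem_P unfolding compatible_def by simp
qed

lemma mem_PB: "enc (X1, enc (X2, X3)) \<in> lcar pB.P \<longleftrightarrow> compatible X1 X2 X3"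
proof
  assume "enc (X1, enc (X2, X3)) \<in> lcar pB.P"
  then have a: "X1 \<in> lcar E1" "enc (X2, X3) \<in> lcar p23.P"
    "p12.m1.proj X1 = pB.m2.proj (enc (X2, X3))"
    using pB.pairsD pB.enc_mem_P by auto
  have "(X2, X3) \<in> p23.pairs" using a(2) p23.enc_mem_P by simp
  then show "compatible X1 X2 X3" unfolding compatible_def using a p23.pairsD p23.proj_P by auto
next
  assume t: "compatible X1 X2 X3"
  then have b: "(X2, X3) \<in> p23.pairs" unfolding compatible_def using p23.pairsI by simp
  then show "enc (X1, enc (X2, X3)) \<in> lcar pB.P"
    using pB.pairsI p23.enc_mem_P p23.proj_P[OF b] t pB.enc_mem_P unfolding compatible_def by simp
qed

lemma bij_reassoc: "bij_betw reassoc (lcar pA.P) (lcar pB.P)"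
proof (rule bij_betw_byWitness[where f'=unassoc])
  show "\<forall>z\<in>lcar pA.P. unassoc (reassoc z) = z" by (metis left_assoc_cases reassoc_enc unassoc_enc)
  show "\<forall>w\<in>lcar pB.P. reassoc (unassoc w) = w" by (metis right_assoc_cases reassoc_enc unassoc_enc)
  show "reassoc ` lcar pA.P \<subseteq> lcar pB.P" by (metis image_subsetI left_assoc_cases reassoc_enc mem_PA mem_PB)
  show "unassoc ` lcar pB.P \<subseteq> lcar pA.P" by (metis image_subsetI right_assoc_cases unassoc_enc mem_PA mem_PB)
qed

lemma le_reassoc: "lle pA.P x y \<longleftrightarrow> lle pB.P (reassoc x) (reassoc y)"
proof -
  obtain X1 X2 X3 Y1 Y2 Y3 where "x = enc (enc (X1, X2), X3)" "y = enc (enc (Y1, Y2), Y3)"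
    by (metis left_assoc_cases)
  then show ?thesis by (simp add: pA.le_P pA.pair_le_def p12.le_P p12.pair_le_def
      pB.le_P pB.pair_le_def p23.le_P p23.pair_le_def)
qed

lemma iota_reassoc: "pB.\<iota>P x = reassoc (pA.\<iota>P x)"
  using pA.iotaP_eq pB.iotaP_eq p12.iotaP_eq p23.iotaP_eq by simp

lemma reassoc_lift_E1:
  assumes H: "H \<in> atoms E1"
  shows "reassoc (lift1 L p12.\<iota>P E3 \<iota>3 (lift1 L \<iota>1 E2 \<iota>2 H)) = lift1 L \<iota>1 p23.P p23.\<iota>P H"
proof -
  have HC: "H \<in> lcar E1" using p12.m1.E.atoms_in[OF H] .
  have yC: "enc (p12.plift1 H) \<in> lcar p12.P" using p12.plift1_atom[OF H] by (simp add: atoms_def)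
  have L1: "lift1 L \<iota>1 E2 \<iota>2 H = enc (p12.plift1 H)" using p12.lift1_eq[OF HC] .
  have L2: "lift1 L p12.\<iota>P E3 \<iota>3 (enc (p12.plift1 H)) = enc (pA.plift1 (enc (p12.plift1 H)))" using pA.lift1_eq[OF yC] .
  have R: "lift1 L \<iota>1 p23.P p23.\<iota>P H = enc (pB.plift1 H)" using pB.lift1_eq[OF HC] .
  show ?thesis
  proof (cases "lle E1 H p12.F1")
    case True
    define h where "h = p12.m1.proj H"
    have hL: "h \<in> lcar L" unfolding h_def using p12.m1.proj_in[OF HC] .
    have Hh: "\<iota>1 h = H" unfolding h_def using p12.m1.atom_below_F[OF H True] by simp
    have l: "p12.plift1 H = (\<iota>1 h, \<iota>2 h)" using p12.plift1_below_F[OF H True] h_def by simp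
    have "pA.plift1 (enc (\<iota>1 h, \<iota>2 h)) = (enc (\<iota>1 h, \<iota>2 h), \<iota>3 h)"
      unfolding pA.plift1_def p12.Fi_P using p12.iota_pair_le_FP[OF hL] p12.proj_P_iota[OF hL] by simp
    moreover have "pB.plift1 H = (\<iota>1 h, enc (\<iota>2 h, \<iota>3 h))"
      unfolding pB.plift1_def using True Hh h_def p23.iotaP_eq by simp
    ultimately show ?thesis using L1 L2 R l by simp
  next
    case False
    have l: "p12.plift1 H = (H, bot E2)" using p12.plift1_not_below_F[OF False] .
    have "\<not> lle p12.P (enc (H, bot E2)) p12.FP" unfolding p12.le_P p12.pair_le_def using False by simp
    then have "pA.plift1 (enc (H, bot E2)) = (enc (H, bot E2), bot E3)" unfolding pA.plift1_def p12.Fi_P by simp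
    moreover have "pB.plift1 H = (H, enc (bot E2, bot E3))" unfolding pB.plift1_def using False p23.bot_P by simp
    ultimately show ?thesis using L1 L2 R l by simp
  qed
qed

lemma reassoc_lift_E2:
  assumes H: "H \<in> atoms E2"
  shows "reassoc (lift1 L p12.\<iota>P E3 \<iota>3 (lift2 L E1 \<iota>1 \<iota>2 H)) = lift2 L E1 \<iota>1 p23.\<iota>P (lift1 L \<iota>2 E3 \<iota>3 H)"
proof -
  have HC: "H \<in> lcar E2" using p12.m2.E.atoms_in[OF H] .
  have yC: "enc (p12.plift2 H) \<in> lcar p12.P" using p12.plift2_atom[OF H] by (simp add: atoms_def)
  have zC: "enc (p23.plift1 H) \<in> lcar p23.P" using p23.plift1_atom[OF H] by (simp add: atoms_def)
  have L1: "lift2 L E1 \<iota>1 \<iota>2 H = enc (p12.plift2 H)" using p12.lift2_eq[OF HC] .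
  have L2: "lift1 L p12.\<iota>P E3 \<iota>3 (enc (p12.plift2 H)) = enc (pA.plift1 (enc (p12.plift2 H)))" using pA.lift1_eq[OF yC] .
  have R1: "lift1 L \<iota>2 E3 \<iota>3 H = enc (p23.plift1 H)" using p23.lift1_eq[OF HC] .
  have R2: "lift2 L E1 \<iota>1 p23.\<iota>P (enc (p23.plift1 H)) = enc (pB.plift2 (enc (p23.plift1 H)))" using pB.lift2_eq[OF zC] .
  show ?thesis
  proof (cases "lle E2 H p12.F2")
    case True
    define h where "h = p12.m2.proj H"
    have hL: "h \<in> lcar L" unfolding h_def using p12.m2.proj_in[OF HC] .
    have l: "p12.plift2 H = (\<iota>1 h, \<iota>2 h)" using p12.plift2_below_F[OF H True] h_def by simp
    have l': "p23.plift1 H = (\<iota>2 h, \<iota>3 h)" using p23.plift1_below_F[OF H True] h_def by simp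
    have "pA.plift1 (enc (\<iota>1 h, \<iota>2 h)) = (enc (\<iota>1 h, \<iota>2 h), \<iota>3 h)"
      unfolding pA.plift1_def p12.Fi_P using p12.iota_pair_le_FP[OF hL] p12.proj_P_iota[OF hL] by simp
    moreover have "pB.plift2 (enc (\<iota>2 h, \<iota>3 h)) = (\<iota>1 h, enc (\<iota>2 h, \<iota>3 h))"
      unfolding pB.plift2_def p23.Fi_P using p23.iota_pair_le_FP[OF hL] p23.proj_P_iota[OF hL] by simp
    ultimately show ?thesis using L1 L2 R1 R2 l l' by simp
  next
    case False
    have l: "p12.plift2 H = (bot E1, H)" using p12.plift2_not_below_F[OF False] .
    have l': "p23.plift1 H = (H, bot E3)" using p23.plift1_not_below_F[OF False] .
    have "\<not> lle p12.P (enc (bot E1, H)) p12.FP" unfolding p12.le_P p12.pair_le_def using False by simp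
    then have "pA.plift1 (enc (bot E1, H)) = (enc (bot E1, H), bot E3)" unfolding pA.plift1_def p12.Fi_P by simp
    moreover have "\<not> lle p23.P (enc (H, bot E3)) p23.FP" unfolding p23.le_P p23.pair_le_def using False by simp
    then have "pB.plift2 (enc (H, bot E3)) = (bot E1, enc (H, bot E3))" unfolding pB.plift2_def p23.Fi_P by simp
    ultimately show ?thesis using L1 L2 R1 R2 l l' by simp
  qed
qed

lemma reassoc_lift_E3:
  assumes H: "H \<in> atoms E3"
  shows "reassoc (lift2 L p12.P p12.\<iota>P \<iota>3 H) = lift2 L E1 \<iota>1 p23.\<iota>P (lift2 L E2 \<iota>2 \<iota>3 H)"
proof -
  have HC: "H \<in> lcar E3" using p23.m2.E.atoms_in[OF H] .
  have zC: "enc (p23.plift2 H) \<in> lcar p23.P" using p23.plift2_atom[OF H] by (simp add: atoms_def)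
  have L: "lift2 L p12.P p12.\<iota>P \<iota>3 H = enc (pA.plift2 H)" using pA.lift2_eq[OF HC] .
  have R1: "lift2 L E2 \<iota>2 \<iota>3 H = enc (p23.plift2 H)" using p23.lift2_eq[OF HC] .
  have R2: "lift2 L E1 \<iota>1 p23.\<iota>P (enc (p23.plift2 H)) = enc (pB.plift2 (enc (p23.plift2 H)))" using pB.lift2_eq[OF zC] .
  show ?thesis
  proof (cases "lle E3 H p23.F2")
    case True
    define h where "h = p23.m2.proj H"
    have hL: "h \<in> lcar L" unfolding h_def using p23.m2.proj_in[OF HC] .
    have l': "p23.plift2 H = (\<iota>2 h, \<iota>3 h)" using p23.plift2_below_F[OF H True] h_def by simp
    have "pA.plift2 H = (enc (\<iota>1 h, \<iota>2 h), \<iota>3 h)"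
      unfolding pA.plift2_def using True h_def p12.iotaP_eq p23.m2.atom_below_F[OF H True] by simp
    moreover have "pB.plift2 (enc (\<iota>2 h, \<iota>3 h)) = (\<iota>1 h, enc (\<iota>2 h, \<iota>3 h))"
      unfolding pB.plift2_def p23.Fi_P using p23.iota_pair_le_FP[OF hL] p23.proj_P_iota[OF hL] by simp
    ultimately show ?thesis using L R1 R2 l' by simp
  next
    case False
    have l': "p23.plift2 H = (bot E2, H)" using p23.plift2_not_below_F[OF False] .
    have "pA.plift2 H = (enc (bot E1, bot E2), H)" unfolding pA.plift2_def using False p12.bot_P by simp
    moreover have "\<not> lle p23.P (enc (bot E2, H)) p23.FP" unfolding p23.le_P p23.pair_le_def using False by simp
    then have "pB.plift2 (enc (bot E2, H)) = (bot E1, enc (bot E2, H))" unfolding pB.plift2_def p23.Fi_P by simp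
    ultimately show ?thesis using L R1 R2 l' by simp
  qed
qed

end

lemma MDeq_dprod_assoc:
  assumes geom_L: "geometric L" and d1: "is_diag L (E1, \<iota>1, J1)"
    and d2: "is_diag L (E2, \<iota>2, J2)" and d3: "is_diag L (E3, \<iota>3, J3)"
  shows "MDeq L (delta (dprod L (dprod L (E1, \<iota>1, J1) (E2, \<iota>2, J2)) (E3, \<iota>3, J3)))
    (delta (dprod L (E1, \<iota>1, J1) (dprod L (E2, \<iota>2, J2) (E3, \<iota>3, J3))))"
proof -
  interpret pushout_triple L E1 E2 E3 \<iota>1 \<iota>2 \<iota>3
    using pushout_pair_of_diag[OF geom_L d1 d2] pushout_pair_of_diag[OF geom_L d2 d3]
    by (simp add: pushout_triple_def)
  have J1: "set J1 \<subseteq> atoms E1" and J2: "set J2 \<subseteq> atoms E2" and J3: "set J3 \<subseteq> atoms E3"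
    using d1 d2 d3 by auto
  define W12 where "W12 = map (lift1 L \<iota>1 E2 \<iota>2) J1 @ map (lift2 L E1 \<iota>1 \<iota>2) J2"
  define W23 where "W23 = map (lift1 L \<iota>2 E3 \<iota>3) J2 @ map (lift2 L E2 \<iota>2 \<iota>3) J3"
  define WA where "WA = map (lift1 L p12.\<iota>P E3 \<iota>3) W12 @ map (lift2 L p12.P p12.\<iota>P \<iota>3) J3"
  define WB where "WB = map (lift1 L \<iota>1 p23.P p23.\<iota>P) J1 @ map (lift2 L E1 \<iota>1 p23.\<iota>P) W23"
  have d12: "is_diag L (p12.P, p12.\<iota>P, W12)" using dprod_diag[OF geom_L d1 d2] unfolding W12_def by simp
  have d23: "is_diag L (p23.P, p23.\<iota>P, W23)" using dprod_diag[OF geom_L d2 d3] unfolding W23_def by simp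
  have dA: "is_diag L (pA.P, pA.\<iota>P, WA)" using dprod_diag[OF geom_L d12 d3] unfolding WA_def by simp
  have dB: "is_diag L (pB.P, pB.\<iota>P, WB)" using dprod_diag[OF geom_L d1 d23] unfolding WB_def by simp
  have "WB = map reassoc WA"
    unfolding WA_def WB_def W12_def W23_def using J1 J2 J3
    by (auto simp: reassoc_lift_E1 reassoc_lift_E2 reassoc_lift_E3 intro!: map_cong)
  then have "MDeq L (delta (pA.P, pA.\<iota>P, WA)) (delta (pB.P, pB.\<iota>P, WB))"
    using MDeq_order_iso[OF dA dB bij_reassoc le_reassoc iota_reassoc] by simp
  then show ?thesis unfolding WA_def WB_def W12_def W23_def by simp
qed

lemma MDeq_dprod_comm:
  assumes geom_L: "geometric L" and d1: "is_diag L (E1, \<iota>1, J1)" and d2: "is_diag L (E2, \<iota>2, J2)"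
  shows "MDeq L (delta (dprod L (E1, \<iota>1, J1) (E2, \<iota>2, J2)))
    (\<lambda>d. (-1) ^ (length J1 * length J2) * delta (dprod L (E2, \<iota>2, J2) (E1, \<iota>1, J1)) d)"
proof -
  let ?W1 = "map (lift1 L \<iota>1 E2 \<iota>2) J1" and ?W2 = "map (lift2 L E1 \<iota>1 \<iota>2) J2"
  let ?P = "pushout L E1 \<iota>1 E2 \<iota>2" and ?\<iota> = "pincl \<iota>1 \<iota>2"
  have "is_diag L (?P, ?\<iota>, [] @ ?W1 @ ?W2)" using dprod_diag[OF geom_L d1 d2] by simp
  from MDeq_swap_blocks[OF this] have "MDeq L (delta (dprod L (E1, \<iota>1, J1) (E2, \<iota>2, J2)))
      (\<lambda>d. (-1) ^ (length J1 * length J2) * delta (?P, ?\<iota>, ?W2 @ ?W1) d)" by simp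
  moreover have "MDeq L (delta (?P, ?\<iota>, ?W2 @ ?W1)) (\<lambda>d. 1 * delta (dprod L (E2, \<iota>2, J2) (E1, \<iota>1, J1)) d)"
    using MDeq_sym[OF MDeq_dprod_swap[OF geom_L d1 d2]] by simp
  ultimately show ?thesis using MDeq_scaled_trans by fastforce
qed

lemma MDeq_unit_right:
  assumes geom_L: "geometric L" and d: "is_diag L (E, \<iota>, J)"
  shows "MDeq L (delta (E, \<iota>, J)) (delta (dprod L (E, \<iota>, J) (L, id, [])))"
  using MDeq_trans[OF MDeq_unit_left[OF geom_L d] MDeq_dprod_swap[OF geom_L d is_diag_unit[OF geom_L]]]
  by simp

lemma deg_dprod:
  assumes geom_L: "geometric L" and d1: "is_diag L (E1, \<iota>1, J1)" and d2: "is_diag L (E2, \<iota>2, J2)"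
  shows "deg L (dprod L (E1, \<iota>1, J1) (E2, \<iota>2, J2)) = deg L (E1, \<iota>1, J1) + deg L (E2, \<iota>2, J2)"
proof -
  interpret pushout_pair L E1 E2 \<iota>1 \<iota>2 using pushout_pair_of_diag[OF geom_L d1 d2] .
  show ?thesis using deg_pushout d1 d2 by simp
qed

theorem lemma4:
  fixes L :: lat
  assumes "geometric L" and "nontrivial L"
  shows "(\<forall>\<Gamma>1 \<Gamma>2 \<Gamma>3. is_diag L \<Gamma>1 \<and> is_diag L \<Gamma>2 \<and> is_diag L \<Gamma>3 \<longrightarrow>
            MDeq L (delta (dprod L (dprod L \<Gamma>1 \<Gamma>2) \<Gamma>3)) (delta (dprod L \<Gamma>1 (dprod L \<Gamma>2 \<Gamma>3))))
       \<and> (\<forall>\<Gamma>1 \<Gamma>2. is_diag L \<Gamma>1 \<and> is_diag L \<Gamma>2 \<longrightarrow>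
            MDeq L (delta (dprod L \<Gamma>1 \<Gamma>2))
                   (\<lambda>d. (-1::rat) ^ nat \<bar>deg L \<Gamma>1 * deg L \<Gamma>2\<bar> * delta (dprod L \<Gamma>2 \<Gamma>1) d))
       \<and> (\<forall>\<Gamma>1 \<Gamma>2. is_diag L \<Gamma>1 \<and> is_diag L \<Gamma>2 \<longrightarrow>
            deg L (dprod L \<Gamma>1 \<Gamma>2) = deg L \<Gamma>1 + deg L \<Gamma>2)
       \<and> (\<forall>\<Gamma>. is_diag L \<Gamma> \<longrightarrow>
            MDeq L (delta (dprod L (L, id, []) \<Gamma>)) (delta \<Gamma>) \<and>
            MDeq L (delta (dprod L \<Gamma> (L, id, []))) (delta \<Gamma>))"
proof (intro conjI allI impI)
  fix \<Gamma>1 \<Gamma>2 \<Gamma>3 :: diag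
  assume "is_diag L \<Gamma>1 \<and> is_diag L \<Gamma>2 \<and> is_diag L \<Gamma>3"
  then show "MDeq L (delta (dprod L (dprod L \<Gamma>1 \<Gamma>2) \<Gamma>3)) (delta (dprod L \<Gamma>1 (dprod L \<Gamma>2 \<Gamma>3)))"
    using MDeq_dprod_assoc[OF assms(1)] by (cases \<Gamma>1, cases \<Gamma>2, cases \<Gamma>3) auto
next
  fix \<Gamma>1 \<Gamma>2 :: diag
  assume "is_diag L \<Gamma>1 \<and> is_diag L \<Gamma>2"
  then show "MDeq L (delta (dprod L \<Gamma>1 \<Gamma>2))
      (\<lambda>d. (-1::rat) ^ nat \<bar>deg L \<Gamma>1 * deg L \<Gamma>2\<bar> * delta (dprod L \<Gamma>2 \<Gamma>1) d)"
    using MDeq_dprod_comm[OF assms(1)] by (cases \<Gamma>1, cases \<Gamma>2) (auto simp only: sign_deg_mult)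
next
  fix \<Gamma>1 \<Gamma>2 :: diag
  assume "is_diag L \<Gamma>1 \<and> is_diag L \<Gamma>2"
  then show "deg L (dprod L \<Gamma>1 \<Gamma>2) = deg L \<Gamma>1 + deg L \<Gamma>2"
    using deg_dprod[OF assms(1)] by (cases \<Gamma>1, cases \<Gamma>2) auto
next
  fix \<Gamma> :: diag
  assume "is_diag L \<Gamma>"
  then show "MDeq L (delta (dprod L (L, id, []) \<Gamma>)) (delta \<Gamma>)"
    and "MDeq L (delta (dprod L \<Gamma> (L, id, []))) (delta \<Gamma>)"
    using MDeq_sym[OF MDeq_unit_left[OF assms(1)]] MDeq_sym[OF MDeq_unit_right[OF assms(1)]]
    by (cases \<Gamma>, auto)+
qed

end
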